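(* Let $\mathcal M$ be a sufficiently saturated geometric structure with universe $M$. Let $\mathbf x=(x_1,\dots,x_n)$ and $y$ be variables, and let $\chi(\mathbf x,y)$ be a formula of the form $\bigwedge_{i=1}^r C_i(\mathbf x^i,y)$, where each $\mathbf x^i$ is a subtuple of $\mathbf x$ and each $C_i(\mathbf x^i,y)$ is a formula defining an $\mathrm{acl}(\emptyset)$-definable $(|\mathbf x^i|+1)$-curve. Let $\mathbf x'$ be the subtuple of $\mathbf x$ consisting of all variables occurring in some $\mathbf x^i$. Then $\chi(\mathbf x,y)$ is equivalent in $\mathcal M$ to a disjunction $$E(\mathbf x',y)\vee\bigvee_{l=1}^L\bigl(y=q_l\wedge\phi_l(\mathbf x')\bigr),$$ where $E(\mathbf x',y)$ is a formula defining an $\mathrm{acl}(\emptyset)$-definable $(|\mathbf x'|+1)$-curve, $q_1,\dots,q_L\in\mathrm{acl}(\emptyset)$, each $\phi_l(\mathbf x')$ defines a boolean combination of $\mathrm{acl}(\emptyset)$-definable curve-based cylinders, and $\mathcal M\models E(\mathbf x',y)\rightarrow\bigwedge_{l=1}^L y\neq q_l$.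
   Context: A structure $\mathcal M$ is a geometric structure if every model of its theory satisfies: (1) Exchange: $a\in\mathrm{acl}(bC)\setminus\mathrm{acl}(C)\Rightarrow b\in\mathrm{acl}(aC)$; (2) Uniform finiteness: for each formula $\psi(y,\mathbf w)$ there is $k$ such that for every tuple $\mathbf a$ the set $\{b:\psi(b,\mathbf a)\}$ is infinite or has size $\le k$. Dimension of a definable set $X\subseteq M^n$ (defined by $\Phi$ over parameters $B$): the largest $d$ such that in a saturated extension some tuple satisfying $\Phi$ has a subtuple $(a_{i_1},\dots,a_{i_d})$ with $a_{i_{j+1}}\notin\mathrm{acl}(\{a_{i_1},\dots,a_{i_j}\}\cup B)$. An $A$-definable $n$-curve is a subset of $M^n$ of dimension $\le 1$ definable with parameters from $A$. A set $\tilde C\subseteq M^m$ is an $A$-definable cylinder based on an $n$-curve if there are indices $1\le i_1<\dots<i_n\le m$ and an $A$-definable $n$-curve $C$ with $\tilde C=\{(x_1,\dots,x_m)\in M^m:(x_{i_1},\dots,x_{i_n})\in C\}$; an $A$-definable curve-based cylinder is such a cylinder for some $n$. "$\mathrm{acl}(\emptyset)$-definable" means definable with parameters from $\mathrm{acl}(\emptyset)$. *)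

theory Defs
  imports Main
begin

text \<open>A structure with universe UNIV :: 'a set is given by an interpretation
  I :: 'r => 'a list => bool of the relation symbols 'r.  Formulas may contain
  parameters (elements of the universe) as terms; a formula over A is one whose
  parameters lie in A.\<close>

datatype 'a tm = Var nat | Par 'a

datatype ('r, 'a) fm =
    FEq "'a tm" "'a tm"
  | FRel 'r "'a tm list"
  | FNeg "('r, 'a) fm"
  | FAnd "('r, 'a) fm" "('r, 'a) fm"
  | FEx nat "('r, 'a) fm"

primrec tval :: "(nat \<Rightarrow> 'a) \<Rightarrow> 'a tm \<Rightarrow> 'a" where
  "tval v (Var i) = v i"
| "tval v (Par a) = a"

primrec tvars :: "'a tm \<Rightarrow> nat set" where
  "tvars (Var i) = {i}"
| "tvars (Par a) = {}"

primrec tpars :: "'a tm \<Rightarrow> 'a set" where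
  "tpars (Var i) = {}"
| "tpars (Par a) = {a}"

primrec sat :: "('r \<Rightarrow> 'a list \<Rightarrow> bool) \<Rightarrow> (nat \<Rightarrow> 'a) \<Rightarrow> ('r, 'a) fm \<Rightarrow> bool" where
  "sat I v (FEq s t) = (tval v s = tval v t)"
| "sat I v (FRel R ts) = I R (map (tval v) ts)"
| "sat I v (FNeg \<phi>) = (\<not> sat I v \<phi>)"
| "sat I v (FAnd \<phi> \<psi>) = (sat I v \<phi> \<and> sat I v \<psi>)"
| "sat I v (FEx i \<phi>) = (\<exists>a. sat I (v(i := a)) \<phi>)"

primrec fv :: "('r, 'a) fm \<Rightarrow> nat set" where
  "fv (FEq s t) = tvars s \<union> tvars t"
| "fv (FRel R ts) = (\<Union>t\<in>set ts. tvars t)"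
| "fv (FNeg \<phi>) = fv \<phi>"
| "fv (FAnd \<phi> \<psi>) = fv \<phi> \<union> fv \<psi>"
| "fv (FEx i \<phi>) = fv \<phi> - {i}"

primrec params :: "('r, 'a) fm \<Rightarrow> 'a set" where
  "params (FEq s t) = tpars s \<union> tpars t"
| "params (FRel R ts) = (\<Union>t\<in>set ts. tpars t)"
| "params (FNeg \<phi>) = params \<phi>"
| "params (FAnd \<phi> \<psi>) = params \<phi> \<union> params \<psi>"
| "params (FEx i \<phi>) = params \<phi>"

text \<open>M^n is represented by the lists of length n.  The set defined by a formula
  with free variables among 0..n-1 (variable i read as the i-th coordinate).\<close>

definition defset :: "('r \<Rightarrow> 'a list \<Rightarrow> bool) \<Rightarrow> nat \<Rightarrow> ('r, 'a) fm \<Rightarrow> 'a list set" where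
  "defset I n \<phi> = {xs. length xs = n \<and> sat I (\<lambda>i. xs ! i) \<phi>}"

definition definable :: "('r \<Rightarrow> 'a list \<Rightarrow> bool) \<Rightarrow> 'a set \<Rightarrow> nat \<Rightarrow> 'a list set \<Rightarrow> bool" where
  "definable I A n X \<longleftrightarrow>
     (\<exists>\<phi>. params \<phi> \<subseteq> A \<and> fv \<phi> \<subseteq> {..<n} \<and> X = defset I n \<phi>)"

definition acl :: "('r \<Rightarrow> 'a list \<Rightarrow> bool) \<Rightarrow> 'a set \<Rightarrow> 'a set" where
  "acl I A = {b. \<exists>\<phi>. params \<phi> \<subseteq> A \<and> fv \<phi> \<subseteq> {0}
                     \<and> finite {c. sat I (\<lambda>_. c) \<phi>} \<and> sat I (\<lambda>_. b) \<phi>}"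

definition dim_ge :: "('r \<Rightarrow> 'a list \<Rightarrow> bool) \<Rightarrow> 'a set \<Rightarrow> 'a list set \<Rightarrow> nat \<Rightarrow> bool" where
  "dim_ge I B X d \<longleftrightarrow>
     (\<exists>xs\<in>X. \<exists>is. length is = d \<and> sorted_wrt (<) is \<and> (\<forall>i\<in>set is. i < length xs)
        \<and> (\<forall>j<d. xs ! (is ! j) \<notin> acl I ((\<lambda>k. xs ! (is ! k)) ` {..<j} \<union> B)))"

definition curve :: "('r \<Rightarrow> 'a list \<Rightarrow> bool) \<Rightarrow> 'a set \<Rightarrow> nat \<Rightarrow> 'a list set \<Rightarrow> bool" where
  "curve I A n X \<longleftrightarrow>
     (\<exists>\<phi>. params \<phi> \<subseteq> A \<and> fv \<phi> \<subseteq> {..<n} \<and> X = defset I n \<phi>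
          \<and> \<not> dim_ge I (params \<phi>) X 2)"

definition proj :: "nat set \<Rightarrow> 'a list \<Rightarrow> 'a list" where
  "proj S xs = map (\<lambda>j. xs ! j) (sorted_list_of_set S)"

definition cylinders :: "('r \<Rightarrow> 'a list \<Rightarrow> bool) \<Rightarrow> 'a set \<Rightarrow> nat \<Rightarrow> 'a list set set" where
  "cylinders I A m =
     {Y. \<exists>S C. S \<subseteq> {..<m} \<and> curve I A (card S) C
            \<and> Y = {xs. length xs = m \<and> proj S xs \<in> C}}"

inductive_set boolcomb :: "'a list set set \<Rightarrow> nat \<Rightarrow> 'a list set set"
  for G :: "'a list set set" and m :: nat where
  bc_basic: "Y \<in> G \<Longrightarrow> Y \<in> boolcomb G m"
| bc_univ: "{xs. length xs = m} \<in> boolcomb G m"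
| bc_compl: "Y \<in> boolcomb G m \<Longrightarrow> {xs. length xs = m} - Y \<in> boolcomb G m"
| bc_inter: "Y \<in> boolcomb G m \<Longrightarrow> Z \<in> boolcomb G m \<Longrightarrow> Y \<inter> Z \<in> boolcomb G m"

definition exchange :: "('r \<Rightarrow> 'a list \<Rightarrow> bool) \<Rightarrow> bool" where
  "exchange I \<longleftrightarrow>
     (\<forall>a b C. a \<in> acl I (insert b C) - acl I C \<longrightarrow> b \<in> acl I (insert a C))"

definition uniformly_finite :: "('r \<Rightarrow> 'a list \<Rightarrow> bool) \<Rightarrow> bool" where
  "uniformly_finite I \<longleftrightarrow>
     (\<forall>\<psi> :: ('r, 'a) fm. params \<psi> = {} \<longrightarrow>
        (\<exists>k::nat. \<forall>v. infinite {b. sat I (v(0 := b)) \<psi>} \<or> card {b. sat I (v(0 := b)) \<psi>} \<le> k))"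

definition geometric :: "('r \<Rightarrow> 'a list \<Rightarrow> bool) \<Rightarrow> bool" where
  "geometric I \<longleftrightarrow> exchange I \<and> uniformly_finite I"

text \<open>Saturation (the structure is saturated in its own cardinality): every set of
  formulas in the free variable 0 over a parameter set A of cardinality smaller
  than that of the universe which is finitely satisfiable is satisfiable.\<close>

definition saturated :: "('r \<Rightarrow> 'a list \<Rightarrow> bool) \<Rightarrow> bool" where
  "saturated I \<longleftrightarrow>
     (\<forall>(A :: 'a set) (\<Sigma> :: ('r, 'a) fm set).
        (card_of A, card_of (UNIV :: 'a set)) \<in> ordLess
        \<and> (\<forall>\<phi>\<in>\<Sigma>. fv \<phi> \<subseteq> {0} \<and> params \<phi> \<subseteq> A)
        \<and> (\<forall>\<Sigma>0\<subseteq>\<Sigma>. finite \<Sigma>0 \<longrightarrow> (\<exists>b. \<forall>\<phi>\<in>\<Sigma>0. sat I (\<lambda>_. b) \<phi>))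
        \<longrightarrow> (\<exists>b. \<forall>\<phi>\<in>\<Sigma>. sat I (\<lambda>_. b) \<phi>))"

end

theory Submission
  imports Defs
begin

text \<open>Call \<open>c\<close> bad for the curve \<open>C\<^sub>i\<close> if the fibre \<open>{w. w @ [c] \<in> C\<^sub>i}\<close> is infinite.
  A bad \<open>c\<close> is algebraic: otherwise, by saturation, its fibre contains a tuple with an entry not
  algebraic over \<open>c\<close>, and by exchange that entry and \<open>c\<close> form a generic pair of the curve.
  By saturation again there are only finitely many bad points; let \<open>Q\<close> collect them.
  Then \<open>E = \<chi> \<and> y \<notin> Q\<close> is a curve: every entry of a tuple of \<open>E\<close> is algebraic over \<open>y\<close>
  (finite fibres), and \<open>y\<close> is algebraic over every non-algebraic entry (the curve \<open>C\<^sub>i\<close>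
  containing that coordinate).  For \<open>q \<in> Q\<close>, \<open>\<chi>(x, q)\<close> is the intersection of the cylinders
  over the fibres of the \<open>C\<^sub>i\<close> at \<open>q\<close>, which are curves because \<open>q\<close> is algebraic.\<close>

section \<open>Formulas and substitution\<close>

lemma finite_tvars [simp]: "finite (tvars t)"
  by (cases t) auto

lemma finite_tpars [simp]: "finite (tpars t)"
  by (cases t) auto

lemma finite_fv [simp]: "finite (fv \<phi>)"
  by (induction \<phi>) auto

lemma finite_params [simp]: "finite (params \<phi>)"
  by (induction \<phi>) auto

lemma tval_agree: "(\<forall>i\<in>tvars t. v i = w i) \<Longrightarrow> tval v t = tval w t"
  by (cases t) auto

lemma sat_agree: "(\<forall>i\<in>fv \<phi>. v i = w i) \<Longrightarrow> sat I v \<phi> = sat I w \<phi>"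
proof (induction \<phi> arbitrary: v w)
  case (FEq s t)
  then show ?case by (simp add: tval_agree[of s v w] tval_agree[of t v w])
next
  case (FRel R ts)
  then have "map (tval v) ts = map (tval w) ts"
    by (auto intro!: map_cong tval_agree)
  then show ?case by (simp only: sat.simps)
next
  case (FEx i \<phi>)
  then have "sat I (v(i := a)) \<phi> = sat I (w(i := a)) \<phi>" for a by auto
  then show ?case by simp
next
  case (FAnd \<phi>1 \<phi>2)
  then show ?case by (metis UnCI fv.simps(4) sat.simps(4))
qed simp_all

fun tsubst :: "(nat \<Rightarrow> 'a tm) \<Rightarrow> ('a \<Rightarrow> 'a tm) \<Rightarrow> 'a tm \<Rightarrow> 'a tm" where
  "tsubst \<sigma> \<tau> (Var i) = \<sigma> i"
| "tsubst \<sigma> \<tau> (Par a) = \<tau> a"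

lemma tvars_tsubst: "tvars (tsubst \<sigma> \<tau> t) = (\<Union>i\<in>tvars t. tvars (\<sigma> i)) \<union> (\<Union>a\<in>tpars t. tvars (\<tau> a))"
  by (cases t) auto

lemma tpars_tsubst: "tpars (tsubst \<sigma> \<tau> t) = (\<Union>i\<in>tvars t. tpars (\<sigma> i)) \<union> (\<Union>a\<in>tpars t. tpars (\<tau> a))"
  by (cases t) auto

lemma tval_tsubst:
  "(\<forall>a\<in>tpars t. tval v (\<tau> a) = a) \<Longrightarrow> tval v (tsubst \<sigma> \<tau> t) = tval (\<lambda>i. tval v (\<sigma> i)) t"
  by (cases t) auto

lemma tvars_fun_upd_Var:
  "(\<Union>j\<in>F. tvars ((\<sigma>(i := Var z)) j)) - {z} \<subseteq> (\<Union>j\<in>F - {i}. tvars (\<sigma> j))"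
  by (auto split: if_split_asm)

lemma tpars_fun_upd_Var: "(\<Union>j\<in>F. tpars ((\<sigma>(i := Var z)) j)) \<subseteq> (\<Union>j\<in>F - {i}. tpars (\<sigma> j))"
  by (auto split: if_split_asm)

lemma subst_exists:
  "\<exists>\<psi>. fv \<psi> \<subseteq> (\<Union>i\<in>fv \<phi>. tvars (\<sigma> i)) \<union> (\<Union>a\<in>params \<phi>. tvars (\<tau> a))
     \<and> params \<psi> \<subseteq> (\<Union>i\<in>fv \<phi>. tpars (\<sigma> i)) \<union> (\<Union>a\<in>params \<phi>. tpars (\<tau> a))
     \<and> (\<forall>v. (\<forall>a\<in>params \<phi>. tval v (\<tau> a) = a) \<longrightarrow> sat I v \<psi> = sat I (\<lambda>i. tval v (\<sigma> i)) \<phi>)"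
proof (induction \<phi> arbitrary: \<sigma>)
  case (FEq s t)
  show ?case
    by (rule exI[of _ "FEq (tsubst \<sigma> \<tau> s) (tsubst \<sigma> \<tau> t)"])
       (auto simp: tvars_tsubst tpars_tsubst tval_tsubst)
next
  case (FRel R ts)
  have "map (tval v) (map (tsubst \<sigma> \<tau>) ts) = map (tval (\<lambda>i. tval v (\<sigma> i))) ts"
    if "\<forall>a\<in>params (FRel R ts). tval v (\<tau> a) = a" for v
    using that by (auto simp: tval_tsubst)
  then show ?case
    by (intro exI[of _ "FRel R (map (tsubst \<sigma> \<tau>) ts)"])
       (auto simp del: map_map simp: tvars_tsubst tpars_tsubst)
next
  case (FNeg \<phi>)
  then show ?case by (metis fv.simps(3) params.simps(3) sat.simps(3))
next
  case (FAnd \<phi>1 \<phi>2)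
  from FAnd.IH[of \<sigma>] obtain \<psi>1 \<psi>2 where
    "fv \<psi>1 \<subseteq> (\<Union>i\<in>fv \<phi>1. tvars (\<sigma> i)) \<union> (\<Union>a\<in>params \<phi>1. tvars (\<tau> a))"
    "params \<psi>1 \<subseteq> (\<Union>i\<in>fv \<phi>1. tpars (\<sigma> i)) \<union> (\<Union>a\<in>params \<phi>1. tpars (\<tau> a))"
    "\<forall>v. (\<forall>a\<in>params \<phi>1. tval v (\<tau> a) = a) \<longrightarrow> sat I v \<psi>1 = sat I (\<lambda>i. tval v (\<sigma> i)) \<phi>1"
    "fv \<psi>2 \<subseteq> (\<Union>i\<in>fv \<phi>2. tvars (\<sigma> i)) \<union> (\<Union>a\<in>params \<phi>2. tvars (\<tau> a))"
    "params \<psi>2 \<subseteq> (\<Union>i\<in>fv \<phi>2. tpars (\<sigma> i)) \<union> (\<Union>a\<in>params \<phi>2. tpars (\<tau> a))"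
    "\<forall>v. (\<forall>a\<in>params \<phi>2. tval v (\<tau> a) = a) \<longrightarrow> sat I v \<psi>2 = sat I (\<lambda>i. tval v (\<sigma> i)) \<phi>2"
    by blast
  then show ?case by (intro exI[of _ "FAnd \<psi>1 \<psi>2"]) auto
next
  case (FEx i \<phi>)
  \<comment> \<open>rename the bound variable to one that occurs in no substituted term\<close>
  obtain z where z: "z \<notin> (\<Union>j\<in>fv \<phi>. tvars (\<sigma> j)) \<union> (\<Union>a\<in>params \<phi>. tvars (\<tau> a))"
    using ex_new_if_finite[OF infinite_UNIV_nat] by (metis finite_UN_I finite_Un finite_fv finite_params finite_tvars)
  from FEx.IH[of "\<sigma>(i := Var z)"] obtain \<psi> where
    fv\<psi>: "fv \<psi> \<subseteq> (\<Union>j\<in>fv \<phi>. tvars ((\<sigma>(i := Var z)) j)) \<union> (\<Union>a\<in>params \<phi>. tvars (\<tau> a))" and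
    params\<psi>: "params \<psi> \<subseteq> (\<Union>j\<in>fv \<phi>. tpars ((\<sigma>(i := Var z)) j)) \<union> (\<Union>a\<in>params \<phi>. tpars (\<tau> a))" and
    sat\<psi>: "\<forall>v. (\<forall>a\<in>params \<phi>. tval v (\<tau> a) = a) \<longrightarrow>
            sat I v \<psi> = sat I (\<lambda>j. tval v ((\<sigma>(i := Var z)) j)) \<phi>"
    by blast
  have "sat I (v(z := b)) \<psi> = sat I ((\<lambda>j. tval v (\<sigma> j))(i := b)) \<phi>"
    if v: "\<forall>a\<in>params \<phi>. tval v (\<tau> a) = a" for v b
  proof -
    have "\<forall>a\<in>params \<phi>. tval (v(z := b)) (\<tau> a) = a"
      using v z by (metis (no_types, lifting) UN_I UnCI fun_upd_other tval_agree)
    then have "sat I (v(z := b)) \<psi> = sat I (\<lambda>j. tval (v(z := b)) ((\<sigma>(i := Var z)) j)) \<phi>"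
      using sat\<psi> by blast
    also have "\<dots> = sat I ((\<lambda>j. tval v (\<sigma> j))(i := b)) \<phi>"
      using z by (intro sat_agree) (auto intro!: tval_agree)
    finally show ?thesis .
  qed
  moreover have "fv \<psi> - {z} \<subseteq> (\<Union>j\<in>fv \<phi> - {i}. tvars (\<sigma> j)) \<union> (\<Union>a\<in>params \<phi>. tvars (\<tau> a))"
    using fv\<psi> tvars_fun_upd_Var[where F="fv \<phi>" and \<sigma>=\<sigma> and i=i and z=z] by blast
  moreover have "params \<psi> \<subseteq> (\<Union>j\<in>fv \<phi> - {i}. tpars (\<sigma> j)) \<union> (\<Union>a\<in>params \<phi>. tpars (\<tau> a))"
    using params\<psi> tpars_fun_upd_Var[where F="fv \<phi>" and \<sigma>=\<sigma> and i=i and z=z] by blast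
  ultimately show ?case
    by (intro exI[of _ "FEx z \<psi>"]) simp
qed

definition definable_pred :: "('r \<Rightarrow> 'a list \<Rightarrow> bool) \<Rightarrow> 'a set \<Rightarrow> nat set \<Rightarrow> ((nat \<Rightarrow> 'a) \<Rightarrow> bool) \<Rightarrow> bool" where
  "definable_pred I A V Q \<longleftrightarrow> (\<exists>\<phi>. params \<phi> \<subseteq> A \<and> fv \<phi> \<subseteq> V \<and> (\<forall>v. sat I v \<phi> = Q v))"

lemma definable_pred_sat: "params \<phi> \<subseteq> A \<Longrightarrow> fv \<phi> \<subseteq> V \<Longrightarrow> definable_pred I A V (\<lambda>v. sat I v \<phi>)"
  unfolding definable_pred_def by blast

lemma definable_pred_mono:
  "definable_pred I A V Q \<Longrightarrow> A \<subseteq> A' \<Longrightarrow> V \<subseteq> V' \<Longrightarrow> definable_pred I A' V' Q"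
  unfolding definable_pred_def by blast

lemma definable_pred_cong: "definable_pred I A V Q \<Longrightarrow> (\<And>v. Q v = Q' v) \<Longrightarrow> definable_pred I A V Q'"
  unfolding definable_pred_def by metis

lemma definable_pred_agree: "definable_pred I A V Q \<Longrightarrow> (\<forall>i\<in>V. v i = w i) \<Longrightarrow> Q v = Q w"
  unfolding definable_pred_def using sat_agree by (metis subsetD)

lemma definable_pred_True: "definable_pred I A V (\<lambda>_. True)"
  unfolding definable_pred_def by (rule exI[of _ "FEx 0 (FEq (Var 0) (Var 0))"]) auto

lemma definable_pred_eq:
  "definable_pred I (tpars s \<union> tpars t) (tvars s \<union> tvars t) (\<lambda>v. tval v s = tval v t)"
  unfolding definable_pred_def by (rule exI[of _ "FEq s t"]) auto

lemma definable_pred_neg: "definable_pred I A V Q \<Longrightarrow> definable_pred I A V (\<lambda>v. \<not> Q v)"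
  unfolding definable_pred_def by (metis fv.simps(3) params.simps(3) sat.simps(3))

lemma definable_pred_conj:
  assumes "definable_pred I A V Q" and "definable_pred I A V Q'"
  shows "definable_pred I A V (\<lambda>v. Q v \<and> Q' v)"
proof -
  from assms obtain \<phi> \<psi> where
    "params \<phi> \<subseteq> A" "fv \<phi> \<subseteq> V" "\<forall>v. sat I v \<phi> = Q v"
    "params \<psi> \<subseteq> A" "fv \<psi> \<subseteq> V" "\<forall>v. sat I v \<psi> = Q' v"
    unfolding definable_pred_def by blast
  then show ?thesis unfolding definable_pred_def by (intro exI[of _ "FAnd \<phi> \<psi>"]) auto
qed

lemma definable_pred_ex:
  assumes "definable_pred I A V Q"
  shows "definable_pred I A (V - {i}) (\<lambda>v. \<exists>a. Q (v(i := a)))"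
proof -
  from assms obtain \<phi> where "params \<phi> \<subseteq> A" "fv \<phi> \<subseteq> V" "\<forall>v. sat I v \<phi> = Q v"
    unfolding definable_pred_def by blast
  then show ?thesis unfolding definable_pred_def by (intro exI[of _ "FEx i \<phi>"]) auto
qed

lemma definable_pred_Ball:
  "finite K \<Longrightarrow> (\<And>k. k \<in> K \<Longrightarrow> definable_pred I A V (Q k)) \<Longrightarrow> definable_pred I A V (\<lambda>v. \<forall>k\<in>K. Q k v)"
proof (induction K rule: finite_induct)
  case empty
  then show ?case by (simp add: definable_pred_True)
next
  case (insert k K)
  then have "definable_pred I A V (\<lambda>v. Q k v \<and> (\<forall>k\<in>K. Q k v))"
    by (intro definable_pred_conj) auto
  then show ?case by (rule definable_pred_cong) simp
qed

lemma definable_pred_ex_block: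
  "finite X \<Longrightarrow> definable_pred I A V Q \<Longrightarrow>
   definable_pred I A (V - X) (\<lambda>v. \<exists>u. Q (\<lambda>i. if i \<in> X then u i else v i))"
proof (induction X rule: finite_induct)
  case empty
  then show ?case by simp
next
  case (insert x X)
  then have "definable_pred I A (V - X - {x}) (\<lambda>v. \<exists>b u. Q (\<lambda>i. if i \<in> X then u i else (v(x := b)) i))"
    by (intro definable_pred_ex) auto
  moreover have "(\<exists>b u. Q (\<lambda>i. if i \<in> X then u i else (v(x := b)) i)) \<longleftrightarrow>
                 (\<exists>u. Q (\<lambda>i. if i \<in> insert x X then u i else v i))" for v
  proof
    assume "\<exists>b u. Q (\<lambda>i. if i \<in> X then u i else (v(x := b)) i)"
    then obtain b u where "Q (\<lambda>i. if i \<in> X then u i else (v(x := b)) i)" by blast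
    moreover have "(\<lambda>i. if i \<in> X then u i else (v(x := b)) i) =
                   (\<lambda>i. if i \<in> insert x X then (u(x := b)) i else v i)"
      using insert.hyps by auto
    ultimately show "\<exists>u. Q (\<lambda>i. if i \<in> insert x X then u i else v i)" by auto
  next
    assume "\<exists>u. Q (\<lambda>i. if i \<in> insert x X then u i else v i)"
    then obtain u where "Q (\<lambda>i. if i \<in> insert x X then u i else v i)" by blast
    moreover have "(\<lambda>i. if i \<in> insert x X then u i else v i) =
                   (\<lambda>i. if i \<in> X then u i else (v(x := u x)) i)"
      using insert.hyps by auto
    ultimately show "\<exists>b u. Q (\<lambda>i. if i \<in> X then u i else (v(x := b)) i)" by auto
  qed
  ultimately have "definable_pred I A (V - X - {x}) (\<lambda>v. \<exists>u. Q (\<lambda>i. if i \<in> insert x X then u i else v i))"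
    by (rule definable_pred_cong)
  then show ?case by (rule definable_pred_mono) auto
qed

lemma definable_pred_subst:
  assumes "definable_pred I A V Q"
  shows "definable_pred I (A \<union> (\<Union>i\<in>V. tpars (\<sigma> i))) (\<Union>i\<in>V. tvars (\<sigma> i)) (\<lambda>v. Q (\<lambda>i. tval v (\<sigma> i)))"
proof -
  from assms obtain \<phi> where \<phi>: "params \<phi> \<subseteq> A" "fv \<phi> \<subseteq> V" "\<forall>v. sat I v \<phi> = Q v"
    unfolding definable_pred_def by blast
  from subst_exists[where \<phi>=\<phi> and \<sigma>=\<sigma> and \<tau>=Par and I=I] obtain \<psi> where
    fv\<psi>: "fv \<psi> \<subseteq> (\<Union>i\<in>fv \<phi>. tvars (\<sigma> i)) \<union> (\<Union>a\<in>params \<phi>. tvars (Par a))" and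
    params\<psi>: "params \<psi> \<subseteq> (\<Union>i\<in>fv \<phi>. tpars (\<sigma> i)) \<union> (\<Union>a\<in>params \<phi>. tpars (Par a))" and
    sat\<psi>: "\<forall>v. (\<forall>a\<in>params \<phi>. tval v (Par a) = a) \<longrightarrow> sat I v \<psi> = sat I (\<lambda>i. tval v (\<sigma> i)) \<phi>"
    by blast
  have "fv \<psi> \<subseteq> (\<Union>i\<in>V. tvars (\<sigma> i))"
    using fv\<psi> \<phi>(2) by auto
  moreover have "params \<psi> \<subseteq> A \<union> (\<Union>i\<in>V. tpars (\<sigma> i))"
    using params\<psi> \<phi>(1,2) by auto
  moreover have "\<forall>v. sat I v \<psi> = Q (\<lambda>i. tval v (\<sigma> i))"
    using sat\<psi> \<phi>(3) by simp
  ultimately show ?thesis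
    unfolding definable_pred_def by blast
qed

lemma definable_pred_abstract_param:
  fixes \<phi> :: "('r, 'a) fm"
  assumes "params \<phi> \<subseteq> insert c A" and "fv \<phi> \<subseteq> V"
  shows "\<exists>Q. definable_pred I A (insert z V) Q \<and> (\<forall>v. v z = c \<longrightarrow> Q v = sat I v \<phi>)"
proof -
  define \<tau> where "\<tau> = (\<lambda>a. if a = c then Var z else Par a)"
  obtain \<psi> where \<psi>:
    "fv \<psi> \<subseteq> (\<Union>i\<in>fv \<phi>. tvars (Var i :: 'a tm)) \<union> (\<Union>a\<in>params \<phi>. tvars (\<tau> a))
     \<and> params \<psi> \<subseteq> (\<Union>i\<in>fv \<phi>. tpars (Var i :: 'a tm)) \<union> (\<Union>a\<in>params \<phi>. tpars (\<tau> a))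
     \<and> (\<forall>v. (\<forall>a\<in>params \<phi>. tval v (\<tau> a) = a) \<longrightarrow> sat I v \<psi> = sat I (\<lambda>i. tval v (Var i)) \<phi>)"
    using subst_exists[where \<phi>=\<phi> and \<sigma>=Var and \<tau>=\<tau> and I=I] by (elim exE)
  then have fv\<psi>: "fv \<psi> \<subseteq> fv \<phi> \<union> (\<Union>a\<in>params \<phi>. tvars (\<tau> a))"
    and params\<psi>: "params \<psi> \<subseteq> (\<Union>a\<in>params \<phi>. tpars (\<tau> a))"
    and sat\<psi>: "\<forall>v. (\<forall>a\<in>params \<phi>. tval v (\<tau> a) = a) \<longrightarrow> sat I v \<psi> = sat I v \<phi>"
    by simp_all
  have "(\<Union>a\<in>params \<phi>. tvars (\<tau> a)) \<subseteq> {z}" and params_\<tau>: "(\<Union>a\<in>params \<phi>. tpars (\<tau> a)) \<subseteq> A"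
    using assms(1) by (auto simp: \<tau>_def split: if_splits)
  then have "fv \<psi> \<subseteq> fv \<phi> \<union> {z}"
    using fv\<psi> by (meson Un_mono order_refl order_trans)
  then have "fv \<psi> \<subseteq> insert z V" "params \<psi> \<subseteq> A"
    using params\<psi> params_\<tau> assms(2) by auto
  moreover have "\<forall>v. v z = c \<longrightarrow> sat I v \<psi> = sat I v \<phi>"
    using sat\<psi> by (simp add: \<tau>_def)
  ultimately show ?thesis
    by (intro exI[of _ "\<lambda>v. sat I v \<psi>"] conjI definable_pred_sat) simp_all
qed

definition at_least :: "nat \<Rightarrow> 'a set \<Rightarrow> bool" where
  "at_least k S \<longleftrightarrow> infinite S \<or> k \<le> card S"

lemma at_least_0 [simp]: "at_least 0 S"
  by (simp add: at_least_def)

lemma at_least_Suc: "at_least (Suc k) S \<longleftrightarrow> (\<exists>a\<in>S. at_least k (S - {a}))"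
proof
  assume S: "at_least (Suc k) S"
  then obtain a where "a \<in> S"
    unfolding at_least_def by (metis card.empty ex_in_conv finite.emptyI not_less_eq_eq zero_le)
  with S show "\<exists>a\<in>S. at_least k (S - {a})"
    unfolding at_least_def by (metis Diff_infinite_finite Suc_le_mono card.remove finite.emptyI finite_insert)
next
  assume "\<exists>a\<in>S. at_least k (S - {a})"
  then show "at_least (Suc k) S"
    unfolding at_least_def by (metis Suc_le_mono card_Diff_singleton_if card.remove finite_Diff)
qed

lemma all_at_least_iff_infinite: "(\<forall>k. at_least k S) \<longleftrightarrow> infinite S"
  by (auto simp: at_least_def) (metis Suc_n_not_le_n)

lemma definable_pred_notin_image:
  assumes "finite W"
  shows "definable_pred I {} (insert w W) (\<lambda>v. v w \<notin> v ` W)"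
proof -
  have "definable_pred I {} (insert w W) (\<lambda>v. \<not> tval v (Var w) = tval v (Var u))" if "u \<in> W" for u
    using that by (intro definable_pred_neg definable_pred_mono[OF definable_pred_eq]) auto
  with assms have "definable_pred I {} (insert w W) (\<lambda>v. \<forall>u\<in>W. \<not> tval v (Var w) = tval v (Var u))"
    by (intro definable_pred_Ball)
  then show ?thesis by (rule definable_pred_cong) auto
qed

text \<open>There are at least \<open>k + 1\<close> solutions outside \<open>v ` W\<close> iff some solution \<open>b \<notin> v ` W\<close>,
  stored in a fresh variable \<open>w\<close>, leaves at least \<open>k\<close> solutions outside \<open>v ` insert w W\<close>.\<close>

lemma definable_pred_at_least_avoiding:
  assumes Q: "definable_pred I A V Q" and V: "finite V" and W: "finite W"
  shows "definable_pred I A ((V - {x}) \<union> W) (\<lambda>v. at_least k ({a. Q (v(x := a))} - v ` W))"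
  using W
proof (induction k arbitrary: W)
  case 0
  then show ?case by (simp add: definable_pred_True)
next
  case (Suc k)
  obtain w where w: "w \<notin> V \<union> W \<union> {x}"
    using ex_new_if_finite[OF infinite_UNIV_nat] V Suc.prems by (metis finite_Un finite.emptyI finite.insertI)
  let ?V = "insert w ((V - {x}) \<union> W)"
  have "definable_pred I A ?V (\<lambda>v. Q (\<lambda>i. tval v ((Var(x := Var w)) i)))"
    by (rule definable_pred_mono[OF definable_pred_subst[OF Q]]) (auto split: if_splits)
  moreover have "definable_pred I A ?V (\<lambda>v. v w \<notin> v ` W)"
    using definable_pred_notin_image[OF Suc.prems, of I w] by (rule definable_pred_mono) auto
  moreover have "definable_pred I A ?V (\<lambda>v. at_least k ({a. Q (v(x := a))} - v ` insert w W))"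
    by (rule definable_pred_mono[OF Suc.IH]) (use Suc.prems in auto)
  ultimately have "definable_pred I A (?V - {w})
      (\<lambda>v. \<exists>b. Q (\<lambda>i. tval (v(w := b)) ((Var(x := Var w)) i)) \<and> (v(w := b)) w \<notin> (v(w := b)) ` W
              \<and> at_least k ({a. Q ((v(w := b))(x := a))} - (v(w := b)) ` insert w W))"
    by (intro definable_pred_ex definable_pred_conj)
  then show ?case
  proof (rule definable_pred_mono[OF definable_pred_cong])
    fix v
    have Q_upd: "Q (\<lambda>i. tval (v(w := b)) ((Var(x := Var w)) i)) = Q (v(x := b))"
      and "Q ((v(w := b))(x := a)) = Q (v(x := a))" for a b
      using w by (auto intro!: definable_pred_agree[OF Q])
    then have Q_fibre: "{a. Q ((v(w := b))(x := a))} = {a. Q (v(x := a))}" for b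
      by simp
    have img: "(v(w := b)) ` W = v ` W" "(v(w := b)) ` insert w W = insert b (v ` W)" for b
      using w by auto
    have diff: "{a. Q (v(x := a))} - insert b (v ` W) = {a. Q (v(x := a))} - v ` W - {b}" for b
      by blast
    then show "(\<exists>b. Q (\<lambda>i. tval (v(w := b)) ((Var(x := Var w)) i)) \<and> (v(w := b)) w \<notin> (v(w := b)) ` W
              \<and> at_least k ({a. Q ((v(w := b))(x := a))} - (v(w := b)) ` insert w W))
          = at_least (Suc k) ({a. Q (v(x := a))} - v ` W)"
      unfolding at_least_Suc Q_upd Q_fibre img diff fun_upd_same by blast
  qed (use w in auto)
qed

lemma definable_pred_at_least:
  "definable_pred I A V Q \<Longrightarrow> finite V \<Longrightarrow> definable_pred I A (V - {x}) (\<lambda>v. at_least k {a. Q (v(x := a))})"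
  using definable_pred_at_least_avoiding[of I A V Q "{}" x k] by simp

section \<open>Algebraic closure\<close>

lemma acl_mono: "A \<subseteq> B \<Longrightarrow> acl I A \<subseteq> acl I B"
  unfolding acl_def by blast

lemma aclI_definable_pred:
  assumes "definable_pred I A {0} Q" and "finite {c. Q (\<lambda>_. c)}" and "Q (\<lambda>_. b)"
  shows "b \<in> acl I A"
  using assms unfolding acl_def definable_pred_def by auto

text \<open>\<open>b\<close> satisfies \<open>\<exists>y. \<psi>(y) \<and> P(x, y) \<and> |P(M, y)| \<le> N\<close>, where \<open>\<psi>\<close> witnesses \<open>c \<in> acl A\<close> and
  \<open>N = |P(M, c)|\<close>; this formula over \<open>A\<close> has finitely many solutions.\<close>

lemma acl_algebraic_parameter:
  assumes P: "definable_pred I A {0, 1} P" and c: "c \<in> acl I A"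
    and fin: "finite {a. P ((\<lambda>_. a)(1 := c))}" and b: "P ((\<lambda>_. b)(1 := c))"
  shows "b \<in> acl I A"
proof -
  obtain \<psi> where \<psi>: "params \<psi> \<subseteq> A" "fv \<psi> \<subseteq> {0}" "finite {a. sat I (\<lambda>_. a) \<psi>}"
    "sat I (\<lambda>_. c) \<psi>" using c unfolding acl_def by blast
  define N where "N = card {a. P ((\<lambda>_. a)(1 := c))}"
  define R where "R = (\<lambda>v. sat I (\<lambda>_. v 1) \<psi> \<and> P v \<and> \<not> at_least (Suc N) {a. P (v(0 := a))})"
  have "definable_pred I A {0, 1} (\<lambda>v. sat I (\<lambda>i. tval v ((\<lambda>_. Var 1) i)) \<psi>)"
    by (rule definable_pred_mono[OF definable_pred_subst[OF definable_pred_sat[OF \<psi>(1,2)]]]) auto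
  then have "definable_pred I A {0, 1} (\<lambda>v. sat I (\<lambda>_. v 1) \<psi>)"
    by simp
  moreover have "definable_pred I A {0, 1} (\<lambda>v. at_least (Suc N) {a. P (v(0 := a))})"
    by (rule definable_pred_mono[OF definable_pred_at_least[OF P]]) auto
  ultimately have "definable_pred I A {0, 1} R"
    unfolding R_def using P by (intro definable_pred_conj definable_pred_neg)
  then have R_ex: "definable_pred I A {0} (\<lambda>v. \<exists>y. R (v(1 := y)))"
    by (rule definable_pred_mono[OF definable_pred_ex]) auto
  have R_fibre: "{a. P (((\<lambda>_. x)(1 := y))(0 := a))} = {a. P ((\<lambda>_. a)(1 := y))}" for x y
  proof -
    have "P (((\<lambda>_. x)(1 := y))(0 := a)) = P ((\<lambda>_. a)(1 := y))" for a
      by (rule definable_pred_agree[OF P]) simp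
    then show ?thesis by simp
  qed
  show ?thesis
  proof (rule aclI_definable_pred[OF R_ex])
    show "\<exists>y. R ((\<lambda>_. b)(1 := y))"
      using \<psi>(4) fin b unfolding R_def R_fibre N_def at_least_def
      by (intro exI[of _ c]) simp
    have "{x. \<exists>y. R ((\<lambda>_. x)(1 := y))} \<subseteq>
          (\<Union>y\<in>{y. sat I (\<lambda>_. y) \<psi> \<and> finite {a. P ((\<lambda>_. a)(1 := y))}}. {a. P ((\<lambda>_. a)(1 := y))})"
      unfolding R_def R_fibre at_least_def by auto
    moreover have "finite \<dots>"
      using \<psi>(3) by (auto intro: finite_subset)
    ultimately show "finite {x. \<exists>y. R ((\<lambda>_. x)(1 := y))}"
      by (rule finite_subset)
  qed
qed

lemma acl_trans_insert:
  assumes b: "b \<in> acl I (insert c A)" and c: "c \<in> acl I A"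
  shows "b \<in> acl I A"
proof -
  obtain \<phi> where \<phi>: "params \<phi> \<subseteq> insert c A" "fv \<phi> \<subseteq> {0}" "finite {a. sat I (\<lambda>_. a) \<phi>}"
    "sat I (\<lambda>_. b) \<phi>" using b unfolding acl_def by blast
  from definable_pred_abstract_param[OF \<phi>(1,2), of I 1] obtain P
    where "definable_pred I A {1, 0} P" and P_c: "\<forall>v. v 1 = c \<longrightarrow> P v = sat I v \<phi>"
    by blast
  then have P: "definable_pred I A {0, 1} P"
    by (simp add: insert_commute)
  have "P ((\<lambda>_. a)(1 := c)) = sat I (\<lambda>_. a) \<phi>" for a
  proof -
    have "P ((\<lambda>_. a)(1 := c)) = sat I ((\<lambda>_. a)(1 := c)) \<phi>"
      using P_c by simp
    also have "\<dots> = sat I (\<lambda>_. a) \<phi>"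
      using \<phi>(2) by (intro sat_agree) auto
    finally show ?thesis .
  qed
  with \<phi>(3,4) show ?thesis
    by (intro acl_algebraic_parameter[OF P c]) simp_all
qed

lemma acl_trans_finite:
  "finite F \<Longrightarrow> F \<subseteq> acl I A \<Longrightarrow> b \<in> acl I (A \<union> F) \<Longrightarrow> b \<in> acl I A"
proof (induction F arbitrary: b rule: finite_induct)
  case (insert c F)
  have "c \<in> acl I (A \<union> F)"
    using insert.prems acl_mono[of A "A \<union> F"] by auto
  with insert show ?case by (auto intro: acl_trans_insert)
qed simp

lemma acl_Un_algebraic:
  assumes "finite B" and "B \<subseteq> acl I {}"
  shows "acl I (X \<union> B) = acl I X"
proof
  have "B \<subseteq> acl I X"
    using assms(2) acl_mono[of "{}" X] by auto
  then show "acl I (X \<union> B) \<subseteq> acl I X"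
    using acl_trans_finite[OF assms(1)] by blast
qed (rule acl_mono, auto)

lemma definable_iff_definable_pred:
  "definable I A n X \<longleftrightarrow>
   (\<exists>Q. definable_pred I A {..<n} Q \<and> X = {xs. length xs = n \<and> Q (\<lambda>i. xs ! i)})"
proof
  assume "definable I A n X"
  then obtain \<phi> where "params \<phi> \<subseteq> A" "fv \<phi> \<subseteq> {..<n}" "X = defset I n \<phi>"
    unfolding definable_def by blast
  then show "\<exists>Q. definable_pred I A {..<n} Q \<and> X = {xs. length xs = n \<and> Q (\<lambda>i. xs ! i)}"
    unfolding defset_def by (blast intro: definable_pred_sat)
next
  assume "\<exists>Q. definable_pred I A {..<n} Q \<and> X = {xs. length xs = n \<and> Q (\<lambda>i. xs ! i)}"
  then show "definable I A n X"
    unfolding definable_def definable_pred_def defset_def by auto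
qed

lemma ex_shifted_assignment_iff:
  assumes \<phi>: "fv \<phi> \<subseteq> {..<k}" and J: "J \<subseteq> {..<k}" and N: "\<forall>j\<in>J. g j < N"
  defines "f \<equiv> \<lambda>u v i. if i \<in> {N..<N + k} then u i else v i"
  shows "(\<exists>u. sat I (\<lambda>t. f u v (t + N)) \<phi> \<and> (\<forall>j\<in>J. f u v (j + N) = f u v (g j)))
         \<longleftrightarrow> (\<exists>w\<in>defset I k \<phi>. \<forall>j\<in>J. w ! j = v (g j))"
proof
  assume "\<exists>u. sat I (\<lambda>t. f u v (t + N)) \<phi> \<and> (\<forall>j\<in>J. f u v (j + N) = f u v (g j))"
  then obtain u where u: "sat I (\<lambda>t. f u v (t + N)) \<phi>" "\<forall>j\<in>J. f u v (j + N) = f u v (g j)"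
    by blast
  define w where "w = map (\<lambda>t. u (t + N)) [0..<k]"
  have "sat I (\<lambda>i. w ! i) \<phi> = sat I (\<lambda>t. f u v (t + N)) \<phi>"
    by (rule sat_agree) (use \<phi> in \<open>auto simp: w_def f_def\<close>)
  with u(1) have "w \<in> defset I k \<phi>"
    unfolding defset_def w_def by simp
  moreover have "w ! j = v (g j)" if "j \<in> J" for j
  proof -
    have "j < k" "\<not> N \<le> g j"
      using J N that by auto
    then show ?thesis
      using bspec[OF u(2) that] by (simp add: w_def f_def)
  qed
  ultimately show "\<exists>w\<in>defset I k \<phi>. \<forall>j\<in>J. w ! j = v (g j)" by blast
next
  assume "\<exists>w\<in>defset I k \<phi>. \<forall>j\<in>J. w ! j = v (g j)"
  then obtain w where w: "length w = k" "sat I (\<lambda>i. w ! i) \<phi>" "\<forall>j\<in>J. w ! j = v (g j)"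
    unfolding defset_def by blast
  have "sat I (\<lambda>t. f (\<lambda>i. w ! (i - N)) v (t + N)) \<phi> = sat I (\<lambda>i. w ! i) \<phi>"
    by (rule sat_agree) (use \<phi> in \<open>auto simp: f_def\<close>)
  with w(2) have "sat I (\<lambda>t. f (\<lambda>i. w ! (i - N)) v (t + N)) \<phi>" by simp
  moreover have "\<forall>j\<in>J. f (\<lambda>i. w ! (i - N)) v (j + N) = f (\<lambda>i. w ! (i - N)) v (g j)"
    using w(3) J N by (auto simp: f_def)
  ultimately show "\<exists>u. sat I (\<lambda>t. f u v (t + N)) \<phi> \<and> (\<forall>j\<in>J. f u v (j + N) = f u v (g j))"
    by (intro exI[of _ "\<lambda>i. w ! (i - N)"] conjI)
qed

lemma definable_pred_ex_tuple:
  assumes X: "definable I B k X" and J: "J \<subseteq> {..<k}"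
  shows "definable_pred I B (g ` J) (\<lambda>v. \<exists>w\<in>X. \<forall>j\<in>J. w ! j = v (g j))"
proof -
  obtain \<phi> where \<phi>: "params \<phi> \<subseteq> B" "fv \<phi> \<subseteq> {..<k}" and X_def: "X = defset I k \<phi>"
    using X unfolding definable_def by blast
  have "finite (g ` J)"
    using finite_subset[OF J] by simp
  then obtain N where N: "\<forall>j\<in>J. g j < N"
    unfolding finite_nat_set_iff_bounded by auto
  \<comment> \<open>the tuple \<open>w\<close> is stored in the variables \<open>N, \<dots>, N + k - 1\<close>, beyond those of \<open>g ` J\<close>\<close>
  let ?W = "{N..<N + k}"
  let ?f = "\<lambda>u v i. if i \<in> ?W then u i else v i"
  have "definable_pred I B ?W (\<lambda>v. sat I (\<lambda>t. tval v (Var (t + N))) \<phi>)"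
    by (rule definable_pred_mono[OF definable_pred_subst[OF definable_pred_sat[OF \<phi>]]]) auto
  then have "definable_pred I B ?W (\<lambda>v. sat I (\<lambda>t. v (t + N)) \<phi>)"
    by simp
  moreover have "definable_pred I B (g ` J \<union> ?W) (\<lambda>v. \<forall>j\<in>J. tval v (Var (j + N)) = tval v (Var (g j)))"
    using J by (intro definable_pred_Ball definable_pred_mono[OF definable_pred_eq]) (auto intro: finite_subset)
  ultimately have "definable_pred I B (g ` J \<union> ?W - ?W)
      (\<lambda>v. \<exists>u. sat I (\<lambda>t. ?f u v (t + N)) \<phi> \<and> (\<forall>j\<in>J. ?f u v (j + N) = ?f u v (g j)))"
    by (intro definable_pred_ex_block[OF finite_atLeastLessThan] definable_pred_conj)
      (auto elim: definable_pred_mono)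
  then show ?thesis
    unfolding ex_shifted_assignment_iff[OF \<phi>(2) J N] X_def
    by (rule definable_pred_mono) auto
qed

lemma definable_pred_coordinate:
  assumes "definable I B k X" and "j < k"
  shows "definable_pred I B {0} (\<lambda>v. \<exists>w\<in>X. w ! j = v 0)"
proof -
  have "definable_pred I B ((\<lambda>_. 0) ` {j}) (\<lambda>v. \<exists>w\<in>X. \<forall>i\<in>{j}. w ! i = v 0)"
    using assms by (intro definable_pred_ex_tuple) auto
  then show ?thesis by simp
qed

lemma finite_definable_coordinate_acl:
  assumes "definable I B k X" and "finite X" and "w \<in> X" and "j < k"
  shows "w ! j \<in> acl I B"
proof -
  have "{c. \<exists>w\<in>X. w ! j = c} = (\<lambda>w. w ! j) ` X"
    by auto
  then have "finite {c. \<exists>w\<in>X. w ! j = c}"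
    using assms(2) by simp
  then show ?thesis
    using aclI_definable_pred[OF definable_pred_coordinate[OF assms(1,4)]] assms(3) by auto
qed

text \<open>The conditions together with the negations of all algebraic formulas over \<open>B\<close> are finitely
  satisfiable, so saturation realises them.\<close>

lemma saturated_nonalgebraic_solution:
  fixes I :: "'r \<Rightarrow> 'a list \<Rightarrow> bool"
  assumes sat: "saturated I" and B: "finite B"
    and \<P>: "\<forall>P\<in>\<P>. definable_pred I B {0} P" and inf: "infinite {b. \<forall>P\<in>\<P>. P (\<lambda>_. b)}"
  shows "\<exists>b. b \<notin> acl I B \<and> (\<forall>P\<in>\<P>. P (\<lambda>_. b))"
proof -
  define \<Sigma> where "\<Sigma> = {\<phi>. params \<phi> \<subseteq> B \<and> fv \<phi> \<subseteq> {0} \<and> (\<exists>P\<in>\<P>. \<forall>v. sat I v \<phi> = P v)}"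
  define \<Theta> where "\<Theta> = {FNeg \<theta> | \<theta>. params \<theta> \<subseteq> B \<and> fv \<theta> \<subseteq> {0} \<and> finite {c. sat I (\<lambda>_. c) \<theta>}}"
  have "infinite (UNIV :: 'a set)"
    using infinite_super[OF subset_UNIV inf] .
  then have "(card_of B, card_of (UNIV :: 'a set)) \<in> ordLess"
    using finite_ordLess_infinite[OF card_of_Well_order card_of_Well_order] B
    by (simp add: Field_card_of)
  moreover have "\<forall>\<phi>\<in>\<Sigma> \<union> \<Theta>. fv \<phi> \<subseteq> {0} \<and> params \<phi> \<subseteq> B"
    unfolding \<Sigma>_def \<Theta>_def by auto
  moreover have "\<exists>b. \<forall>\<phi>\<in>\<Sigma>0. sat I (\<lambda>_. b) \<phi>" if "\<Sigma>0 \<subseteq> \<Sigma> \<union> \<Theta>" "finite \<Sigma>0" for \<Sigma>0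
  proof -
    define F where "F = (\<Union>\<psi>\<in>\<Sigma>0 \<inter> \<Theta>. {c. \<not> sat I (\<lambda>_. c) \<psi>})"
    have "finite F"
      using that(2) by (auto simp: F_def \<Theta>_def)
    then have "infinite ({b. \<forall>P\<in>\<P>. P (\<lambda>_. b)} - F)"
      using inf by simp
    then obtain b where b: "\<forall>P\<in>\<P>. P (\<lambda>_. b)" "b \<notin> F"
      using infinite_imp_nonempty by blast
    have "sat I (\<lambda>_. b) \<phi>" if "\<phi> \<in> \<Sigma>0" for \<phi>
    proof (cases "\<phi> \<in> \<Theta>")
      case True
      with b(2) that show ?thesis by (auto simp: F_def)
    next
      case False
      with that \<open>\<Sigma>0 \<subseteq> \<Sigma> \<union> \<Theta>\<close> obtain P where "P \<in> \<P>" "\<forall>v. sat I v \<phi> = P v"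
        unfolding \<Sigma>_def by blast
      with b(1) show ?thesis by blast
    qed
    then show ?thesis by blast
  qed
  ultimately have "\<exists>b. \<forall>\<phi>\<in>\<Sigma> \<union> \<Theta>. sat I (\<lambda>_. b) \<phi>"
    using sat[unfolded saturated_def, rule_format, of B "\<Sigma> \<union> \<Theta>"] by blast
  then obtain b where b: "\<forall>\<phi>\<in>\<Sigma> \<union> \<Theta>. sat I (\<lambda>_. b) \<phi>" ..
  have "b \<notin> acl I B"
  proof
    assume "b \<in> acl I B"
    then obtain \<theta> where "params \<theta> \<subseteq> B" "fv \<theta> \<subseteq> {0}" "finite {c. sat I (\<lambda>_. c) \<theta>}"
      and b_\<theta>: "sat I (\<lambda>_. b) \<theta>"
      unfolding acl_def by blast
    then have "FNeg \<theta> \<in> \<Theta>"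
      unfolding \<Theta>_def by blast
    with b have "sat I (\<lambda>_. b) (FNeg \<theta>)" by blast
    with b_\<theta> show False by simp
  qed
  moreover have "P (\<lambda>_. b)" if "P \<in> \<P>" for P
    using \<P> that b unfolding definable_pred_def \<Sigma>_def by blast
  ultimately show ?thesis by blast
qed

lemma dim_ge_2_iff:
  "dim_ge I B X 2 \<longleftrightarrow>
   (\<exists>xs\<in>X. \<exists>a b. a < b \<and> b < length xs \<and> xs ! a \<notin> acl I B \<and> xs ! b \<notin> acl I (insert (xs ! a) B))"
proof
  assume "dim_ge I B X 2"
  then obtain xs "is" where xs: "xs \<in> X" "length is = 2" "sorted_wrt (<) is" "\<forall>i\<in>set is. i < length xs"
    and gen: "\<forall>j<2. xs ! (is ! j) \<notin> acl I ((\<lambda>k. xs ! (is ! k)) ` {..<j} \<union> B)"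
    unfolding dim_ge_def by blast
  then obtain a b where ab: "is = [a, b]"
    by (metis (no_types, opaque_lifting) One_nat_def Suc_length_conv length_0_conv numeral_2_eq_2)
  have "(\<lambda>k. xs ! (is ! k)) ` {..<1} = {xs ! a}"
    using ab by auto
  then have "xs ! a \<notin> acl I B" "xs ! b \<notin> acl I (insert (xs ! a) B)"
    using gen[rule_format, of 0] gen[rule_format, of 1] ab by simp_all
  then show "\<exists>xs\<in>X. \<exists>a b. a < b \<and> b < length xs \<and> xs ! a \<notin> acl I B \<and> xs ! b \<notin> acl I (insert (xs ! a) B)"
    using xs ab by auto
next
  assume "\<exists>xs\<in>X. \<exists>a b. a < b \<and> b < length xs \<and> xs ! a \<notin> acl I B \<and> xs ! b \<notin> acl I (insert (xs ! a) B)"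
  then obtain xs a b where xs: "xs \<in> X" "a < b" "b < length xs"
    and gen: "xs ! a \<notin> acl I B" "xs ! b \<notin> acl I (insert (xs ! a) B)"
    by blast
  have "(\<lambda>k. xs ! ([a, b] ! k)) ` {..<1} = {xs ! a}"
    by auto
  then have "\<forall>j<2. xs ! ([a, b] ! j) \<notin> acl I ((\<lambda>k. xs ! ([a, b] ! k)) ` {..<j} \<union> B)"
    using gen by (auto simp: less_2_cases_iff)
  then show "dim_ge I B X 2"
    unfolding dim_ge_def using xs by (intro bexI[OF _ xs(1)] exI[of _ "[a, b]"]) auto
qed

lemma not_dim_ge_2_acl:
  assumes "\<not> dim_ge I {} X 2" and "xs \<in> X" and "a < b" and "b < length xs" and "xs ! a \<notin> acl I {}"
  shows "xs ! b \<in> acl I {xs ! a}"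
  using assms unfolding dim_ge_2_iff by blast

lemma dim_ge_algebraic_params:
  assumes "finite B" and "B \<subseteq> acl I {}"
  shows "dim_ge I B X d \<longleftrightarrow> dim_ge I {} X d"
  unfolding dim_ge_def acl_Un_algebraic[OF assms] by simp

lemma dim_ge_append_mono:
  assumes "\<forall>w\<in>Y. \<exists>u. w @ u \<in> X" and "dim_ge I B Y d"
  shows "dim_ge I B X d"
proof -
  obtain w "is" where w: "w \<in> Y" "length is = d" "sorted_wrt (<) is" "\<forall>i\<in>set is. i < length w"
    and gen: "\<forall>j<d. w ! (is ! j) \<notin> acl I ((\<lambda>k. w ! (is ! k)) ` {..<j} \<union> B)"
    using assms(2) unfolding dim_ge_def by blast
  obtain u where u: "w @ u \<in> X"
    using assms(1) w(1) by blast
  have "(w @ u) ! (is ! j) = w ! (is ! j)" if "j < d" for j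
    using w(2,4) that by (simp add: nth_append)
  then have "\<forall>j<d. (w @ u) ! (is ! j) \<notin> acl I ((\<lambda>k. (w @ u) ! (is ! k)) ` {..<j} \<union> B)"
    using gen by (metis (no_types, lifting) image_cong lessThan_iff order.strict_trans)
  then show ?thesis
    unfolding dim_ge_def using u w(2,3,4) by (intro bexI[OF _ u] exI[of _ "is"]) auto
qed

lemma definable_finite_params:
  "definable I A n X \<Longrightarrow> \<exists>B. finite B \<and> B \<subseteq> A \<and> definable I B n X"
  unfolding definable_def by (metis finite_params order_refl)

lemma definable_length: "definable I A n X \<Longrightarrow> xs \<in> X \<Longrightarrow> length xs = n"
  unfolding definable_def defset_def by auto

lemma curve_algebraic_iff:
  "curve I (acl I {}) n X \<longleftrightarrow> definable I (acl I {}) n X \<and> \<not> dim_ge I {} X 2"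
proof
  assume "curve I (acl I {}) n X"
  then obtain \<phi> where \<phi>: "params \<phi> \<subseteq> acl I {}" "fv \<phi> \<subseteq> {..<n}" "X = defset I n \<phi>"
    and "\<not> dim_ge I (params \<phi>) X 2"
    unfolding curve_def by blast
  then have "\<not> dim_ge I {} X 2"
    using dim_ge_algebraic_params[OF finite_params \<phi>(1)] by simp
  with \<phi> show "definable I (acl I {}) n X \<and> \<not> dim_ge I {} X 2"
    unfolding definable_def by blast
next
  assume "definable I (acl I {}) n X \<and> \<not> dim_ge I {} X 2"
  then obtain \<phi> where \<phi>: "params \<phi> \<subseteq> acl I {}" "fv \<phi> \<subseteq> {..<n}" "X = defset I n \<phi>"
    and "\<not> dim_ge I {} X 2"
    unfolding definable_def by blast
  then have "\<not> dim_ge I (params \<phi>) X 2"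
    using dim_ge_algebraic_params[OF finite_params \<phi>(1)] by simp
  with \<phi> show "curve I (acl I {}) n X"
    unfolding curve_def by blast
qed

lemma length_proj [simp]: "finite S \<Longrightarrow> length (proj S xs) = card S"
  by (simp add: proj_def)

lemma nth_proj: "finite S \<Longrightarrow> t < card S \<Longrightarrow> proj S xs ! t = xs ! (sorted_list_of_set S ! t)"
  by (simp add: proj_def)

lemma proj_nth_exists:
  assumes "finite S" and "p \<in> S"
  shows "\<exists>t<card S. proj S xs ! t = xs ! p"
proof -
  obtain t where "t < length (sorted_list_of_set S)" "sorted_list_of_set S ! t = p"
    using assms by (metis in_set_conv_nth set_sorted_list_of_set)
  then show ?thesis
    using assms(1) by (intro exI[of _ t]) (simp add: nth_proj)
qed

lemma nth_sorted_list_of_set_in: "finite S \<Longrightarrow> t < card S \<Longrightarrow> sorted_list_of_set S ! t \<in> S"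
  by (metis length_sorted_list_of_set nth_mem set_sorted_list_of_set)

definition positions :: "nat set \<Rightarrow> nat set \<Rightarrow> nat set" where
  "positions U S = {p. p < card U \<and> sorted_list_of_set U ! p \<in> S}"

lemma sorted_list_of_set_positions:
  assumes U: "finite U" and S: "S \<subseteq> U"
  shows "map (\<lambda>p. sorted_list_of_set U ! p) (sorted_list_of_set (positions U S)) = sorted_list_of_set S"
proof -
  let ?e = "sorted_list_of_set U" and ?s = "sorted_list_of_set (positions U S)"
  have e: "sorted_wrt (<) ?e" "length ?e = card U"
    by simp_all
  have s: "sorted_wrt (<) ?s" "set ?s = positions U S"
    by (simp_all add: positions_def)
  have "sorted_wrt (<) (map (\<lambda>p. ?e ! p) ?s)"
    unfolding sorted_wrt_iff_nth_less
  proof (intro allI impI)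
    fix i j assume ij: "i < j" "j < length (map (\<lambda>p. ?e ! p) ?s)"
    then have "?s ! i < ?s ! j" "?s ! j \<in> positions U S"
      using sorted_wrt_nth_less[OF s(1)] s(2) nth_mem[of j ?s] by auto
    then show "map (\<lambda>p. ?e ! p) ?s ! i < map (\<lambda>p. ?e ! p) ?s ! j"
      using ij sorted_wrt_nth_less[OF e(1), of "?s ! i" "?s ! j"] e(2) by (simp add: positions_def)
  qed
  moreover have "set (map (\<lambda>p. ?e ! p) ?s) = S"
  proof -
    have "S \<subseteq> (\<lambda>p. ?e ! p) ` positions U S"
    proof
      fix x assume x: "x \<in> S"
      then obtain p where "p < length ?e" "?e ! p = x"
        using S U by (metis in_set_conv_nth set_sorted_list_of_set subsetD)
      with x e(2) show "x \<in> (\<lambda>p. ?e ! p) ` positions U S"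
        by (auto simp: positions_def)
    qed
    then show ?thesis
      using s(2) by (auto simp: positions_def)
  qed
  ultimately show ?thesis
    using strict_sorted_equal[of "sorted_list_of_set S"] finite_subset[OF S U] by simp
qed

lemma proj_positions:
  assumes "finite U" and "S \<subseteq> U"
  shows "proj (positions U S) (proj U xs) = proj S xs"
proof -
  let ?e = "sorted_list_of_set U"
  have "proj (positions U S) (proj U xs) = map (\<lambda>p. xs ! (?e ! p)) (sorted_list_of_set (positions U S))"
    unfolding proj_def by (auto simp: positions_def)
  also have "\<dots> = map (\<lambda>j. xs ! j) (map (\<lambda>p. ?e ! p) (sorted_list_of_set (positions U S)))"
    by simp
  also have "\<dots> = proj S xs"
    unfolding proj_def sorted_list_of_set_positions[OF assms] ..
  finally show ?thesis .
qed

lemma card_positions: "finite U \<Longrightarrow> S \<subseteq> U \<Longrightarrow> card (positions U S) = card S"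
  using arg_cong[OF sorted_list_of_set_positions, of U S length] by simp

lemma UN_positions:
  assumes "finite U" and "U = (\<Union>i\<in>K. S i)"
  shows "(\<Union>i\<in>K. positions U (S i)) = {..<card U}"
proof -
  have "sorted_list_of_set U ! p \<in> U" if "p < card U" for p
    using assms(1) that by (rule nth_sorted_list_of_set_in)
  then show ?thesis
    using assms(2) by (auto simp: positions_def)
qed

lemma definable_mono: "definable I A n X \<Longrightarrow> A \<subseteq> A' \<Longrightarrow> definable I A' n X"
  unfolding definable_def by blast

lemma definable_subst:
  assumes X: "definable I A k X" and \<sigma>: "\<forall>t<k. tvars (\<sigma> t) \<subseteq> {..<m}"
  shows "definable I (A \<union> (\<Union>t<k. tpars (\<sigma> t))) m
           {zs. length zs = m \<and> map (\<lambda>t. tval (\<lambda>j. zs ! j) (\<sigma> t)) [0..<k] \<in> X}"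
proof -
  obtain Q where Q: "definable_pred I A {..<k} Q" and X_eq: "X = {xs. length xs = k \<and> Q (\<lambda>i. xs ! i)}"
    using X unfolding definable_iff_definable_pred by blast
  have "definable_pred I (A \<union> (\<Union>t<k. tpars (\<sigma> t))) {..<m} (\<lambda>v. Q (\<lambda>i. tval v (\<sigma> i)))"
    by (rule definable_pred_mono[OF definable_pred_subst[OF Q]]) (use \<sigma> in auto)
  moreover have "map (\<lambda>t. tval (\<lambda>j. zs ! j) (\<sigma> t)) [0..<k] \<in> X \<longleftrightarrow> Q (\<lambda>i. tval (\<lambda>j. zs ! j) (\<sigma> i))" for zs
  proof -
    have "Q (\<lambda>i. map (\<lambda>t. tval (\<lambda>j. zs ! j) (\<sigma> t)) [0..<k] ! i) = Q (\<lambda>i. tval (\<lambda>j. zs ! j) (\<sigma> i))"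
      by (rule definable_pred_agree[OF Q]) simp
    then show ?thesis
      unfolding X_eq by simp
  qed
  ultimately show ?thesis
    unfolding definable_iff_definable_pred by (intro exI[of _ "\<lambda>v. Q (\<lambda>i. tval v (\<sigma> i))"]) auto
qed

lemma definable_Int:
  assumes "definable I A n X" and "definable I A n Y"
  shows "definable I A n (X \<inter> Y)"
proof -
  obtain P Q where "definable_pred I A {..<n} P" "X = {xs. length xs = n \<and> P (\<lambda>i. xs ! i)}"
    "definable_pred I A {..<n} Q" "Y = {xs. length xs = n \<and> Q (\<lambda>i. xs ! i)}"
    using assms unfolding definable_iff_definable_pred by blast
  then show ?thesis
    unfolding definable_iff_definable_pred
    by (intro exI[of _ "\<lambda>v. P v \<and> Q v"] conjI definable_pred_conj) auto
qed

lemma definable_INT: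
  fixes r :: nat
  shows "(\<forall>i<r. definable I A n (X i)) \<Longrightarrow> definable I A n ({xs. length xs = n} \<inter> (\<Inter>i<r. X i))"
proof (induction r)
  case 0
  show ?case
    unfolding definable_iff_definable_pred
    by (intro exI[of _ "\<lambda>_. True"] conjI definable_pred_True) auto
next
  case (Suc r)
  have "definable I A n (({xs. length xs = n} \<inter> (\<Inter>i<r. X i)) \<inter> X r)"
    by (rule definable_Int) (use Suc in auto)
  moreover have "({xs. length xs = n} \<inter> (\<Inter>i<r. X i)) \<inter> X r = {xs. length xs = n} \<inter> (\<Inter>i<Suc r. X i)"
    by (auto simp: lessThan_Suc)
  ultimately show ?case by simp
qed

lemma definable_last_notin:
  fixes Q :: "'a set"
  assumes "finite Q" and "Q \<subseteq> A"
  shows "definable I A (Suc m) {zs. length zs = Suc m \<and> last zs \<notin> Q}"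
proof -
  have "definable_pred I A {..<Suc m} (\<lambda>v. \<not> tval v (Var m) = tval v (Par c))" if "c \<in> Q" for c
    using that assms(2) by (intro definable_pred_neg definable_pred_mono[OF definable_pred_eq]) auto
  then have "definable_pred I A {..<Suc m} (\<lambda>v. \<forall>c\<in>Q. \<not> tval v (Var m) = tval v (Par c))"
    using assms(1) by (intro definable_pred_Ball)
  moreover have "last zs = zs ! m" if "length zs = Suc m" for zs :: "'a list"
    using that by (cases zs rule: rev_cases) (auto simp: nth_append)
  ultimately show ?thesis
    unfolding definable_iff_definable_pred
    by (intro exI[of _ "\<lambda>v. \<forall>c\<in>Q. \<not> tval v (Var m) = tval v (Par c)"] conjI) auto
qed

lemma proj_butlast_snoc_eq_map:
  assumes "finite T" and "T \<subseteq> {..<m}" and "length zs = Suc m"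
  shows "proj T (butlast zs) @ [last zs] =
         map (\<lambda>t. zs ! (if t < card T then sorted_list_of_set T ! t else m)) [0..<Suc (card T)]"
proof (rule nth_equalityI)
  fix t assume "t < length (proj T (butlast zs) @ [last zs])"
  then consider "t < card T" | "t = card T"
    using assms(1) by fastforce
  then show "(proj T (butlast zs) @ [last zs]) ! t =
             map (\<lambda>t. zs ! (if t < card T then sorted_list_of_set T ! t else m)) [0..<Suc (card T)] ! t"
  proof cases
    case 1
    then have "sorted_list_of_set T ! t \<in> T"
      using assms(1) by (rule nth_sorted_list_of_set_in[rotated])
    then have "sorted_list_of_set T ! t < m"
      using assms(2) by auto
    with 1 assms show ?thesis
      by (simp add: nth_append nth_proj nth_butlast del: upt_Suc)
  next
    case 2
    with assms show ?thesis
      by (cases zs rule: rev_cases) (auto simp: nth_append simp del: upt_Suc)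
  qed
qed (use assms(1) in simp)

lemma definable_proj_snoc_preimage:
  fixes C :: "'a list set"
  assumes C: "definable I A (Suc (card T)) C" and T: "T \<subseteq> {..<m}"
  shows "definable I A (Suc m) {zs. length zs = Suc m \<and> proj T (butlast zs) @ [last zs] \<in> C}"
proof -
  define \<sigma> where "\<sigma> = (\<lambda>t. Var (if t < card T then sorted_list_of_set T ! t else m) :: 'a tm)"
  have fin: "finite T"
    using T finite_subset by blast
  have "\<forall>t<Suc (card T). tvars (\<sigma> t) \<subseteq> {..<Suc m}"
    using T nth_sorted_list_of_set_in[OF fin] by (auto simp: \<sigma>_def less_Suc_eq)
  from definable_subst[OF C this]
  have pullback: "definable I A (Suc m)
          {zs. length zs = Suc m \<and> map (\<lambda>t. tval (\<lambda>j. zs ! j) (\<sigma> t)) [0..<Suc (card T)] \<in> C}"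
    by (simp add: \<sigma>_def del: upt_Suc)
  have map_eq: "map (\<lambda>t. tval (\<lambda>j. zs ! j) (\<sigma> t)) [0..<Suc (card T)] = proj T (butlast zs) @ [last zs]"
    if "length zs = Suc m" for zs
    using proj_butlast_snoc_eq_map[OF fin T that] by (simp add: \<sigma>_def del: upt_Suc)
  have "{zs. length zs = Suc m \<and> map (\<lambda>t. tval (\<lambda>j. zs ! j) (\<sigma> t)) [0..<Suc (card T)] \<in> C} =
        {zs. length zs = Suc m \<and> proj T (butlast zs) @ [last zs] \<in> C}"
    using map_eq by (intro Collect_cong conj_cong) simp_all
  with pullback show ?thesis
    by simp
qed

definition fibre :: "'a list set \<Rightarrow> 'a \<Rightarrow> 'a list set" where
  "fibre X c = {w. w @ [c] \<in> X}"

lemma definable_fibre: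
  assumes X: "definable I A (Suc k) X"
  shows "definable I (insert c A) k (fibre X c)"
proof -
  define \<sigma> where "\<sigma> = (\<lambda>t. if t < k then Var t else Par c)"
  have pullback: "definable I (A \<union> (\<Union>t<Suc k. tpars (\<sigma> t))) k
          {zs. length zs = k \<and> map (\<lambda>t. tval (\<lambda>j. zs ! j) (\<sigma> t)) [0..<Suc k] \<in> X}"
    by (rule definable_subst[OF X]) (simp add: \<sigma>_def)
  have map_eq: "map (\<lambda>t. tval (\<lambda>j. zs ! j) (\<sigma> t)) [0..<Suc k] = zs @ [c]" if "length zs = k" for zs
    using that by (intro nth_equalityI) (auto simp: \<sigma>_def nth_append simp del: upt_Suc)
  have fibre_len: "length w = k" if "w \<in> fibre X c" for w
    using definable_length[OF X] that by (force simp: fibre_def)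
  have "{zs. length zs = k \<and> map (\<lambda>t. tval (\<lambda>j. zs ! j) (\<sigma> t)) [0..<Suc k] \<in> X} = fibre X c"
  proof (rule set_eqI)
    fix zs
    show "zs \<in> {zs. length zs = k \<and> map (\<lambda>t. tval (\<lambda>j. zs ! j) (\<sigma> t)) [0..<Suc k] \<in> X} \<longleftrightarrow> zs \<in> fibre X c"
      using map_eq[of zs] fibre_len[of zs] by (auto simp: fibre_def)
  qed
  with pullback have "definable I (A \<union> (\<Union>t<Suc k. tpars (\<sigma> t))) k (fibre X c)"
    by simp
  then show ?thesis
    by (rule definable_mono) (auto simp: \<sigma>_def split: if_splits)
qed

section \<open>Fibres of curves\<close>

lemma infinite_coordinate_image:
  assumes "D \<subseteq> {w. length w = k}" and "infinite D"
  shows "\<exists>j<k. infinite ((\<lambda>w. w ! j) ` D)"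
proof (rule ccontr)
  assume "\<not> (\<exists>j<k. infinite ((\<lambda>w. w ! j) ` D))"
  then have "finite (\<Union>j<k. (\<lambda>w. w ! j) ` D)"
    by auto
  moreover have "D \<subseteq> {w. set w \<subseteq> (\<Union>j<k. (\<lambda>w. w ! j) ` D) \<and> length w = k}"
    using assms(1) by (fastforce simp: in_set_conv_nth)
  ultimately have "finite D"
    using finite_lists_length_eq finite_subset by blast
  with assms(2) show False ..
qed

lemma infinite_definable_nonalgebraic_coordinate:
  assumes sat: "saturated I" and B: "finite B" and X: "definable I B k X" and inf: "infinite X"
  shows "\<exists>w\<in>X. \<exists>j<k. w ! j \<notin> acl I B"
proof -
  obtain j where j: "j < k" "infinite ((\<lambda>w. w ! j) ` X)"
    using infinite_coordinate_image[OF _ inf] definable_length[OF X] by blast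
  moreover have "(\<lambda>w. w ! j) ` X = {a. \<forall>P\<in>{\<lambda>v. \<exists>w\<in>X. w ! j = v 0}. P (\<lambda>_. a)}"
    by auto
  ultimately obtain a where "a \<notin> acl I B" "\<exists>w\<in>X. w ! j = a"
    using saturated_nonalgebraic_solution[OF sat B, of "{\<lambda>v. \<exists>w\<in>X. w ! j = v 0}"]
      definable_pred_coordinate[OF X] by auto
  with j(1) show ?thesis by blast
qed

lemma curve_fibre:
  assumes C: "curve I (acl I {}) (Suc k) C" and c: "c \<in> acl I {}"
  shows "curve I (acl I {}) k (fibre C c)"
proof -
  have "definable I (acl I {}) k (fibre C c)"
    using definable_fibre[of I "acl I {}" k C c] C c
    by (simp add: curve_algebraic_iff insert_absorb)
  moreover have "\<not> dim_ge I {} (fibre C c) 2"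
    using C dim_ge_append_mono[of "fibre C c" C I "{}" 2]
    by (auto simp: curve_algebraic_iff fibre_def)
  ultimately show ?thesis
    by (simp add: curve_algebraic_iff)
qed

lemma curve_finite_params:
  assumes "curve I (acl I {}) (Suc k) C"
  obtains B where "finite B" "B \<subseteq> acl I {}" "definable I B (Suc k) C"
    "\<And>c. definable I (insert c B) k (fibre C c)" "\<And>c. acl I (insert c B) = acl I {c}"
proof -
  have "definable I (acl I {}) (Suc k) C"
    using assms by (simp add: curve_algebraic_iff)
  then obtain B where B: "finite B" "B \<subseteq> acl I {}" and C: "definable I B (Suc k) C"
    using definable_finite_params by metis
  have "acl I (insert c B) = acl I {c}" for c
    using acl_Un_algebraic[OF B, of "{c}"] by simp
  then show ?thesis
    using B C definable_fibre[OF C] that by metis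
qed

lemma finite_fibre_coordinate_acl:
  assumes C: "curve I (acl I {}) (Suc k) C"
    and fin: "finite (fibre C c)" and w: "w \<in> fibre C c" and j: "j < k"
  shows "w ! j \<in> acl I {c}"
proof -
  obtain B where "\<And>c. definable I (insert c B) k (fibre C c)" "\<And>c. acl I (insert c B) = acl I {c}"
    using curve_finite_params[OF C] by metis
  then show ?thesis
    using finite_definable_coordinate_acl[of I "insert c B" k "fibre C c"] fin w j by simp
qed

lemma infinite_fibre_acl:
  assumes exch: "exchange I" and sat: "saturated I" and C: "curve I (acl I {}) (Suc k) C"
    and inf: "infinite (fibre C c)"
  shows "c \<in> acl I {}"
proof (rule ccontr)
  assume c: "c \<notin> acl I {}"
  obtain B where "finite B" "\<And>c. definable I (insert c B) k (fibre C c)" "\<And>c. acl I (insert c B) = acl I {c}"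
    using curve_finite_params[OF C] by metis
  then obtain w j where w: "w \<in> fibre C c" "j < k" "w ! j \<notin> acl I {c}"
    using infinite_definable_nonalgebraic_coordinate[OF sat _ _ inf] by (metis finite_insert)
  then have "w ! j \<notin> acl I {}"
    using acl_mono[of "{}" "{c}" I] by blast
  moreover have "c \<notin> acl I {w ! j}"
    using exch c w(3) unfolding exchange_def by blast
  moreover have "w @ [c] \<in> C" "length w = k"
    using w(1) C by (auto simp: fibre_def curve_algebraic_iff dest: definable_length)
  ultimately show False
    using not_dim_ge_2_acl[of I C "w @ [c]" j k] C w(2) by (auto simp: curve_algebraic_iff nth_append)
qed

lemma fibre_coordinate_image:
  assumes "C \<subseteq> {w. length w = Suc k}" and "j < k"
  shows "{a. \<exists>w\<in>C. w ! j = a \<and> w ! k = c} = (\<lambda>w. w ! j) ` fibre C c"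
proof
  show "{a. \<exists>w\<in>C. w ! j = a \<and> w ! k = c} \<subseteq> (\<lambda>w. w ! j) ` fibre C c"
  proof
    fix a assume "a \<in> {a. \<exists>w\<in>C. w ! j = a \<and> w ! k = c}"
    then obtain w where w: "w \<in> C" "w ! j = a" "w ! k = c" by blast
    moreover have "length w = Suc k"
      using w(1) assms(1) by auto
    ultimately have "butlast w \<in> fibre C c" "butlast w ! j = a"
      using assms(2) by (cases w rule: rev_cases; auto simp: fibre_def nth_append)+
    then show "a \<in> (\<lambda>w. w ! j) ` fibre C c" by blast
  qed
  show "(\<lambda>w. w ! j) ` fibre C c \<subseteq> {a. \<exists>w\<in>C. w ! j = a \<and> w ! k = c}"
  proof
    fix a assume "a \<in> (\<lambda>w. w ! j) ` fibre C c"
    then obtain w where w: "w @ [c] \<in> C" "a = w ! j"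
      unfolding fibre_def by blast
    then have "length w = k"
      using assms(1) by auto
    with w assms(2) show "a \<in> {a. \<exists>w\<in>C. w ! j = a \<and> w ! k = c}"
      by (intro CollectI bexI[OF _ w(1)]) (simp add: nth_append)
  qed
qed

lemma definable_pred_fibre_image_at_least:
  assumes C: "definable I B (Suc k) C" and j: "j < k"
  shows "definable_pred I B {0} (\<lambda>v. at_least N ((\<lambda>w. w ! j) ` fibre C (v 0)))"
proof -
  define g where "g = (\<lambda>t. if t = j then 1 else 0 :: nat)"
  define Z where "Z = (\<lambda>v. \<exists>w\<in>C. \<forall>t\<in>{j, k}. w ! t = v (g t))"
  have "definable_pred I B (g ` {j, k}) Z"
    unfolding Z_def using j by (intro definable_pred_ex_tuple[OF C]) auto
  moreover have "g ` {j, k} = {0, 1}"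
    using j by (auto simp: g_def)
  ultimately have "definable_pred I B ({0, 1} - {1}) (\<lambda>v. at_least N {a. Z (v(1 := a))})"
    by (intro definable_pred_at_least) auto
  moreover have "{a. Z (v(1 := a))} = (\<lambda>w. w ! j) ` fibre C (v 0)" for v
    using fibre_coordinate_image[of C k j "v 0"] definable_length[OF C] j by (auto simp: Z_def g_def)
  ultimately show ?thesis
    by (auto elim: definable_pred_mono)
qed

text \<open>If infinitely many fibres were infinite, some coordinate projection would be infinite for
  infinitely many \<open>c\<close>; by saturation such a \<open>c\<close> exists outside \<open>acl\<close>, contradicting
  \<open>infinite_fibre_acl\<close>.\<close>

lemma finite_infinite_fibres:
  assumes exch: "exchange I" and sat: "saturated I" and C: "curve I (acl I {}) (Suc k) C"
  shows "finite {c. infinite (fibre C c)}"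
proof (rule ccontr)
  assume inf: "infinite {c. infinite (fibre C c)}"
  obtain B where B: "finite B" "B \<subseteq> acl I {}" and CB: "definable I B (Suc k) C"
    using curve_finite_params[OF C] by metis
  have fibre_len: "fibre C c \<subseteq> {w. length w = k}" for c
    using definable_length[OF CB] by (fastforce simp: fibre_def)
  have "{c. infinite (fibre C c)} \<subseteq> (\<Union>j<k. {c. infinite ((\<lambda>w. w ! j) ` fibre C c)})"
  proof (intro subsetI)
    fix c assume "c \<in> {c. infinite (fibre C c)}"
    then obtain j where "j < k" "infinite ((\<lambda>w. w ! j) ` fibre C c)"
      using infinite_coordinate_image[OF fibre_len] by auto
    then show "c \<in> (\<Union>j<k. {c. infinite ((\<lambda>w. w ! j) ` fibre C c)})" by blast
  qed
  with inf obtain j where j: "j < k" and inf_j: "infinite {c. infinite ((\<lambda>w. w ! j) ` fibre C c)}"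
    by (metis (no_types, lifting) finite_UN finite_lessThan finite_subset lessThan_iff)
  let ?\<P> = "range (\<lambda>N v. at_least N ((\<lambda>w. w ! j) ` fibre C (v 0)))"
  have "(\<forall>P\<in>?\<P>. P (\<lambda>_. c)) \<longleftrightarrow> infinite ((\<lambda>w. w ! j) ` fibre C c)" for c
    using all_at_least_iff_infinite by auto
  then obtain b where b: "b \<notin> acl I B" "infinite ((\<lambda>w. w ! j) ` fibre C b)"
    using saturated_nonalgebraic_solution[OF sat B(1), of ?\<P>]
      definable_pred_fibre_image_at_least[OF CB j] inf_j by auto
  then have "infinite (fibre C b)"
    using finite_imageI by blast
  then have "b \<in> acl I {}"
    using infinite_fibre_acl[OF exch sat C] by blast
  with b(1) show False
    using acl_mono[of "{}" B I] by blast
qed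

section \<open>Conjunctions of curves\<close>

lemma boolcomb_INT:
  fixes r :: nat
  shows "(\<forall>i<r. Y i \<in> boolcomb G m) \<Longrightarrow> {xs. length xs = m} \<inter> (\<Inter>i<r. Y i) \<in> boolcomb G m"
proof (induction r)
  case 0
  then show ?case by (simp add: boolcomb.bc_univ)
next
  case (Suc r)
  have "{xs. length xs = m} \<inter> (\<Inter>i<Suc r. Y i) = ({xs. length xs = m} \<inter> (\<Inter>i<r. Y i)) \<inter> Y r"
    by (auto simp: lessThan_Suc)
  with Suc show ?case
    by (auto intro: boolcomb.bc_inter)
qed

lemma boolcomb_cylinders_fibres:
  fixes r :: nat
  assumes T: "\<forall>i<r. T i \<subseteq> {..<m}" and C: "\<forall>i<r. curve I (acl I {}) (Suc (card (T i))) (C i)"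
    and c: "c \<in> acl I {}"
  shows "{x. length x = m \<and> (\<forall>i<r. proj (T i) x @ [c] \<in> C i)} \<in> boolcomb (cylinders I (acl I {}) m) m"
proof -
  define Y where "Y = (\<lambda>i. {x. length x = m \<and> proj (T i) x \<in> fibre (C i) c})"
  have "Y i \<in> cylinders I (acl I {}) m" if "i < r" for i
    unfolding cylinders_def Y_def using T C c that
    by (intro CollectI exI[of _ "T i"] exI[of _ "fibre (C i) c"]) (auto intro: curve_fibre)
  then have "{xs. length xs = m} \<inter> (\<Inter>i<r. Y i) \<in> boolcomb (cylinders I (acl I {}) m) m"
    by (intro boolcomb_INT) (auto intro: boolcomb.bc_basic)
  moreover have "{xs. length xs = m} \<inter> (\<Inter>i<r. Y i) = {x. length x = m \<and> (\<forall>i<r. proj (T i) x @ [c] \<in> C i)}"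
    by (auto simp: Y_def fibre_def)
  ultimately show ?thesis by simp
qed

lemma proj_butlast_snoc_nth_exists:
  assumes "finite T" and "p \<in> T" and "T \<subseteq> {..<m}" and "length zs = Suc m"
  shows "\<exists>t<card T. (proj T (butlast zs) @ [last zs]) ! t = zs ! p"
proof -
  obtain t where "t < card T" "proj T (butlast zs) ! t = butlast zs ! p"
    using proj_nth_exists[OF assms(1,2)] by blast
  moreover have "p < m"
    using assms(2,3) by auto
  ultimately show ?thesis
    using assms(1,4) by (intro exI[of _ t]) (simp add: nth_append nth_butlast)
qed

lemma definable_conjunction_avoiding:
  fixes r :: nat
  assumes T: "\<forall>i<r. T i \<subseteq> {..<m}" and C: "\<forall>i<r. definable I A (Suc (card (T i))) (C i)"
    and Q: "finite Q" "Q \<subseteq> A"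
  shows "definable I A (Suc m)
           {zs. length zs = Suc m \<and> (\<forall>i<r. proj (T i) (butlast zs) @ [last zs] \<in> C i) \<and> last zs \<notin> Q}"
proof -
  have "definable I A (Suc m) ({zs. length zs = Suc m} \<inter>
          (\<Inter>i<r. {zs. length zs = Suc m \<and> proj (T i) (butlast zs) @ [last zs] \<in> C i}))"
    using C T by (intro definable_INT allI impI definable_proj_snoc_preimage) auto
  then have "definable I A (Suc m) (({zs. length zs = Suc m} \<inter>
          (\<Inter>i<r. {zs. length zs = Suc m \<and> proj (T i) (butlast zs) @ [last zs] \<in> C i}))
          \<inter> {zs. length zs = Suc m \<and> last zs \<notin> Q})"
    using definable_last_notin[OF Q] by (rule definable_Int)
  moreover have "({zs. length zs = Suc m} \<inter>
          (\<Inter>i<r. {zs. length zs = Suc m \<and> proj (T i) (butlast zs) @ [last zs] \<in> C i}))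
          \<inter> {zs. length zs = Suc m \<and> last zs \<notin> Q} =
        {zs. length zs = Suc m \<and> (\<forall>i<r. proj (T i) (butlast zs) @ [last zs] \<in> C i) \<and> last zs \<notin> Q}"
    by auto
  ultimately show ?thesis
    by simp
qed

lemma conjunction_last_acl:
  fixes r :: nat
  assumes T: "\<forall>i<r. T i \<subseteq> {..<m}" and cover: "(\<Union>i<r. T i) = {..<m}"
    and C: "\<forall>i<r. curve I (acl I {}) (Suc (card (T i))) (C i)"
    and len: "length zs = Suc m" and in_C: "\<forall>i<r. proj (T i) (butlast zs) @ [last zs] \<in> C i"
    and a: "a < m" "zs ! a \<notin> acl I {}"
  shows "last zs \<in> acl I {zs ! a}"
proof -
  obtain i where i: "i < r" "a \<in> T i"
    using cover a(1) by blast
  then have fin: "finite (T i)"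
    using T finite_subset by blast
  then obtain t where t: "t < card (T i)" "(proj (T i) (butlast zs) @ [last zs]) ! t = zs ! a"
    using proj_butlast_snoc_nth_exists[OF _ i(2) _ len] T i(1) by blast
  have "(proj (T i) (butlast zs) @ [last zs]) ! card (T i) \<in> acl I {zs ! a}"
    using not_dim_ge_2_acl[of I "C i" "proj (T i) (butlast zs) @ [last zs]" t "card (T i)"]
      C in_C i(1) t a(2) fin by (simp add: curve_algebraic_iff)
  with fin show ?thesis
    by (simp add: nth_append)
qed

lemma conjunction_entry_acl_last:
  fixes r :: nat
  assumes T: "\<forall>i<r. T i \<subseteq> {..<m}" and cover: "(\<Union>i<r. T i) = {..<m}"
    and C: "\<forall>i<r. curve I (acl I {}) (Suc (card (T i))) (C i)"
    and fin: "\<forall>i<r. finite (fibre (C i) (last zs))"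
    and len: "length zs = Suc m" and in_C: "\<forall>i<r. proj (T i) (butlast zs) @ [last zs] \<in> C i"
    and b: "b < m"
  shows "zs ! b \<in> acl I {last zs}"
proof -
  obtain i where i: "i < r" "b \<in> T i"
    using cover b by blast
  then have fin_T: "finite (T i)"
    using T finite_subset by blast
  then obtain t where t: "t < card (T i)" "(proj (T i) (butlast zs) @ [last zs]) ! t = zs ! b"
    using proj_butlast_snoc_nth_exists[OF _ i(2) _ len] T i(1) by blast
  have "proj (T i) (butlast zs) \<in> fibre (C i) (last zs)"
    using in_C i(1) by (simp add: fibre_def)
  then have "proj (T i) (butlast zs) ! t \<in> acl I {last zs}"
    using finite_fibre_coordinate_acl[of I "card (T i)" "C i"] C fin i(1) t(1) by blast
  with t fin_T show ?thesis
    by (simp add: nth_append)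
qed

lemma curve_conjunction_avoiding:
  fixes r :: nat
  assumes T: "\<forall>i<r. T i \<subseteq> {..<m}" and cover: "(\<Union>i<r. T i) = {..<m}"
    and C: "\<forall>i<r. curve I (acl I {}) (Suc (card (T i))) (C i)"
    and Q: "finite Q" "Q \<subseteq> acl I {}" and fin: "\<forall>i<r. \<forall>c. c \<notin> Q \<longrightarrow> finite (fibre (C i) c)"
  shows "curve I (acl I {}) (Suc m)
           {zs. length zs = Suc m \<and> (\<forall>i<r. proj (T i) (butlast zs) @ [last zs] \<in> C i) \<and> last zs \<notin> Q}"
    (is "curve I _ _ ?E")
proof -
  have "definable I (acl I {}) (Suc m) ?E"
    using C by (intro definable_conjunction_avoiding[OF T _ Q]) (simp add: curve_algebraic_iff)
  moreover have "\<not> dim_ge I {} ?E 2"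
  proof
    assume "dim_ge I {} ?E 2"
    then obtain zs a b where zs: "zs \<in> ?E" and ab: "a < b" "b < length zs"
      and gen: "zs ! a \<notin> acl I {}" "zs ! b \<notin> acl I {zs ! a}"
      unfolding dim_ge_2_iff by auto
    have len: "length zs = Suc m" and in_C: "\<forall>i<r. proj (T i) (butlast zs) @ [last zs] \<in> C i"
      and "last zs \<notin> Q"
      using zs by auto
    then have fin_last: "\<forall>i<r. finite (fibre (C i) (last zs))"
      using fin by blast
    have last_a: "last zs \<in> acl I {zs ! a}"
      using ab len gen(1) by (intro conjunction_last_acl[OF T cover C len in_C]) auto
    show False
    proof (cases "b = m")
      case True
      with last_a gen(2) len show False
        by (cases zs rule: rev_cases) (auto simp: nth_append)
    next
      case False
      with ab len have "zs ! b \<in> acl I {last zs}"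
        by (intro conjunction_entry_acl_last[OF T cover C fin_last len in_C]) simp
      then have "zs ! b \<in> acl I (insert (last zs) {zs ! a})"
        using acl_mono[of "{last zs}" "insert (last zs) {zs ! a}" I] by auto
      with last_a have "zs ! b \<in> acl I {zs ! a}"
        by (rule acl_trans_insert[rotated])
      with gen(2) show False ..
    qed
  qed
  ultimately show ?thesis
    by (simp add: curve_algebraic_iff)
qed

lemma reindex_positions:
  fixes r :: nat
  assumes sub: "\<forall>i<r. S i \<subseteq> {..<n}" and U: "U = (\<Union>i<r. S i)" and T: "T = (\<lambda>i. positions U (S i))"
  shows "finite U" and "\<forall>i<r. T i \<subseteq> {..<card U}" and "(\<Union>i<r. T i) = {..<card U}"
    and "\<forall>i<r. card (T i) = card (S i)" and "i < r \<Longrightarrow> proj (T i) (proj U xs) = proj (S i) xs"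
proof -
  show fin: "finite U"
    unfolding U using sub by (meson finite_UN_I finite_lessThan finite_subset lessThan_iff)
  have S_U: "S i \<subseteq> U" if "i < r" for i
    unfolding U using that by blast
  show "\<forall>i<r. T i \<subseteq> {..<card U}"
    by (auto simp: T positions_def)
  show "(\<Union>i<r. T i) = {..<card U}"
    unfolding T by (rule UN_positions[OF fin U])
  show "\<forall>i<r. card (T i) = card (S i)"
    using card_positions[OF fin S_U] by (simp add: T)
  show "i < r \<Longrightarrow> proj (T i) (proj U xs) = proj (S i) xs"
    unfolding T by (rule proj_positions[OF fin S_U])
qed

lemma curve_conjunction_decomposition:
  fixes r :: nat
  assumes exch: "exchange I" and sat: "saturated I"
    and T: "\<forall>i<r. T i \<subseteq> {..<m}" and cover: "(\<Union>i<r. T i) = {..<m}"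
    and C: "\<forall>i<r. curve I (acl I {}) (Suc (card (T i))) (C i)"
  shows "\<exists>E (L::nat) q \<Phi>. curve I (acl I {}) (Suc m) E \<and> (\<forall>l<L. q l \<in> acl I {})
           \<and> (\<forall>l<L. \<Phi> l \<in> boolcomb (cylinders I (acl I {}) m) m)
           \<and> (\<forall>x y. length x = m \<longrightarrow>
                ((\<forall>i<r. proj (T i) x @ [y] \<in> C i) \<longleftrightarrow> x @ [y] \<in> E \<or> (\<exists>l<L. y = q l \<and> x \<in> \<Phi> l)))
           \<and> (\<forall>zs\<in>E. \<forall>l<L. last zs \<noteq> q l)"
proof -
  define Q where "Q = (\<Union>i<r. {c. infinite (fibre (C i) c)})"
  have "finite Q"
    unfolding Q_def using finite_infinite_fibres[OF exch sat] C by blast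
  moreover have Q_acl: "Q \<subseteq> acl I {}"
    unfolding Q_def using infinite_fibre_acl[OF exch sat] C by blast
  moreover have "\<forall>i<r. \<forall>c. c \<notin> Q \<longrightarrow> finite (fibre (C i) c)"
    unfolding Q_def by blast
  ultimately have curve_E: "curve I (acl I {}) (Suc m)
      {zs. length zs = Suc m \<and> (\<forall>i<r. proj (T i) (butlast zs) @ [last zs] \<in> C i) \<and> last zs \<notin> Q}"
    using curve_conjunction_avoiding[OF T cover C] by blast
  obtain q where q: "bij_betw q {..<card Q} Q"
    using ex_bij_betw_nat_finite[OF \<open>finite Q\<close>] atLeast0LessThan by metis
  then have q_Q: "y \<in> Q \<longleftrightarrow> (\<exists>l<card Q. y = q l)" for y
    unfolding bij_betw_def by auto
  have "q l \<in> acl I {}" if "l < card Q" for l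
    using q_Q Q_acl that by blast
  moreover have "{x. length x = m \<and> (\<forall>i<r. proj (T i) x @ [q l] \<in> C i)} \<in> boolcomb (cylinders I (acl I {}) m) m"
    if "l < card Q" for l
    using boolcomb_cylinders_fibres[OF T C] q_Q Q_acl that by blast
  ultimately show ?thesis
    using curve_E q_Q
    by (intro exI[of _ "{zs. length zs = Suc m \<and> (\<forall>i<r. proj (T i) (butlast zs) @ [last zs] \<in> C i) \<and> last zs \<notin> Q}"]
        exI[of _ "card Q"] exI[of _ q] exI[of _ "\<lambda>l. {x. length x = m \<and> (\<forall>i<r. proj (T i) x @ [q l] \<in> C i)}"])
       auto
qed

theorem lemma3p6:
  fixes I :: "'r \<Rightarrow> 'a list \<Rightarrow> bool"
    and n r :: nat
    and S :: "nat \<Rightarrow> nat set"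
    and C :: "nat \<Rightarrow> 'a list set"
  assumes geom: "geometric I"
    and sat: "saturated I"
    and sub: "\<forall>i<r. S i \<subseteq> {..<n}"
    and crv: "\<forall>i<r. curve I (acl I {}) (card (S i) + 1) (C i)"
  shows "\<exists>E (L::nat) (q :: nat \<Rightarrow> 'a) (\<Phi> :: nat \<Rightarrow> 'a list set).
           curve I (acl I {}) (card (\<Union>i<r. S i) + 1) E
         \<and> (\<forall>l<L. q l \<in> acl I {})
         \<and> (\<forall>l<L. \<Phi> l \<in> boolcomb (cylinders I (acl I {}) (card (\<Union>i<r. S i)))
                                   (card (\<Union>i<r. S i)))
         \<and> (\<forall>xs y. length xs = n \<longrightarrow>
              ((\<forall>i<r. proj (S i) xs @ [y] \<in> C i) \<longleftrightarrow>
               (proj (\<Union>i<r. S i) xs @ [y] \<in> E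
                \<or> (\<exists>l<L. y = q l \<and> proj (\<Union>i<r. S i) xs \<in> \<Phi> l))))
         \<and> (\<forall>zs\<in>E. \<forall>l<L. last zs \<noteq> q l)"
proof -
  define U where "U = (\<Union>i<r. S i)"
  define T where "T = (\<lambda>i. positions U (S i))"
  note reindex = reindex_positions[OF sub U_def T_def]
  have exch: "exchange I"
    using geom by (simp add: geometric_def)
  have curves: "\<forall>i<r. curve I (acl I {}) (Suc (card (T i))) (C i)"
    using crv reindex(4) by simp
  obtain E and L :: nat and q \<Phi> where E: "curve I (acl I {}) (Suc (card U)) E"
      and q: "\<forall>l<L. q l \<in> acl I {}"
      and \<Phi>: "\<forall>l<L. \<Phi> l \<in> boolcomb (cylinders I (acl I {}) (card U)) (card U)"
      and equiv: "\<forall>x y. length x = card U \<longrightarrow>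
         ((\<forall>i<r. proj (T i) x @ [y] \<in> C i) \<longleftrightarrow> x @ [y] \<in> E \<or> (\<exists>l<L. y = q l \<and> x \<in> \<Phi> l))"
      and last: "\<forall>zs\<in>E. \<forall>l<L. last zs \<noteq> q l"
    using curve_conjunction_decomposition[OF exch sat reindex(2,3) curves] by (elim exE conjE)
  have "(\<forall>i<r. proj (S i) xs @ [y] \<in> C i) \<longleftrightarrow>
        proj U xs @ [y] \<in> E \<or> (\<exists>l<L. y = q l \<and> proj U xs \<in> \<Phi> l)" for xs y
  proof -
    have "(\<forall>i<r. proj (S i) xs @ [y] \<in> C i) \<longleftrightarrow> (\<forall>i<r. proj (T i) (proj U xs) @ [y] \<in> C i)"
      using reindex(5)[of _ xs] by auto
    with equiv reindex(1) show ?thesis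
      by simp
  qed
  with E q \<Phi> last show ?thesis
    unfolding U_def by (intro exI[of _ E] exI[of _ L] exI[of _ q] exI[of _ \<Phi>]) simp
qed

end
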